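(* Let $k\ge1$ be an integer, $a,b,c,d\ge0$, and let $(\phi,\psi)$ be a solution of $\phi''-\phi+f(\phi,\psi)=0$, $\psi''-\psi+g(\phi,\psi)=0$. Then (i) $\|(\phi,\psi)\|^2+\|\partial_x(\phi,\psi)\|^2=(2k+2)P(\phi,\psi)$; (ii) $\|(\phi,\psi)\|^2-\|\partial_x(\phi,\psi)\|^2=2P(\phi,\psi)$; (iii) $\|\partial_x(\phi,\psi)\|^2=\frac{k}{k+2}\|(\phi,\psi)\|^2$; (iv) $P(\phi,\psi)=\frac1{k+2}\|(\phi,\psi)\|^2$; (v) $P(\phi,\psi)=\frac1k\|\partial_x(\phi,\psi)\|^2$. In particular, every nontrivial solution belongs to $\mathcal{P}$.
   Context: $H(u,v)=\frac{a}{2k+2}(u^{2k+2}+v^{2k+2})+\frac{b}{k+1}(uv)^{k+1}+\frac{c}{k}u^{k+2}v^k+\frac{d}{k}u^kv^{k+2}$, $f=H_u$, $g=H_v$; $P(u,v)=\int_{\mathbb{R}}H(u,v)dx$; $\|(u,v)\|^2=\|u\|_{L^2}^2+\|v\|_{L^2}^2$, $\|\partial_x(u,v)\|^2=\|u'\|_{L^2}^2+\|v'\|_{L^2}^2$; $\mathcal{P}=\{(u,v)\in H^1\times H^1\setminus\{(0,0)\}:P(u,v)>0\}$. A solution means $(\phi,\psi)\in H^1(\mathbb{R})\times H^1(\mathbb{R})$ with $\int(\phi w+\phi'w'-f(\phi,\psi)w)dx=0$ and $\int(\psi z+\psi'z'-g(\phi,\psi)z)dx=0$ for all $w,z\in H^1(\mathbb{R})$.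 *)

theory Defs
  imports "HOL-Analysis.Analysis"
begin

definition H :: "nat \<Rightarrow> real \<Rightarrow> real \<Rightarrow> real \<Rightarrow> real \<Rightarrow> real \<Rightarrow> real \<Rightarrow> real" where
  "H k a b c d u v =
     a / (2 * real k + 2) * (u ^ (2*k+2) + v ^ (2*k+2))
   + b / (real k + 1) * (u * v) ^ (k+1)
   + c / real k * u ^ (k+2) * v ^ k
   + d / real k * u ^ k * v ^ (k+2)"

definition f :: "nat \<Rightarrow> real \<Rightarrow> real \<Rightarrow> real \<Rightarrow> real \<Rightarrow> real \<Rightarrow> real \<Rightarrow> real" where
  "f k a b c d u v = deriv (\<lambda>s. H k a b c d s v) u"

definition g :: "nat \<Rightarrow> real \<Rightarrow> real \<Rightarrow> real \<Rightarrow> real \<Rightarrow> real \<Rightarrow> real \<Rightarrow> real" where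
  "g k a b c d u v = deriv (\<lambda>t. H k a b c d u t) v"

definition test_fun :: "(real \<Rightarrow> real) \<Rightarrow> bool" where
  "test_fun w \<longleftrightarrow>
     (\<exists>D :: nat \<Rightarrow> real \<Rightarrow> real. D 0 = w \<and>
        (\<forall>n x. (D n has_real_derivative D (Suc n) x) (at x))) \<and>
     (\<exists>R. \<forall>x. \<bar>x\<bar> > R \<longrightarrow> w x = 0)"

definition L2 :: "(real \<Rightarrow> real) \<Rightarrow> bool" where
  "L2 u \<longleftrightarrow> u \<in> borel_measurable lborel \<and> integrable lborel (\<lambda>x. (u x)\<^sup>2)"

definition H1_with_deriv :: "(real \<Rightarrow> real) \<Rightarrow> (real \<Rightarrow> real) \<Rightarrow> bool" where
  "H1_with_deriv u u' \<longleftrightarrow> L2 u \<and> L2 u' \<and>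
     (\<forall>w. test_fun w \<longrightarrow>
        integral\<^sup>L lborel (\<lambda>x. u x * deriv w x) = - integral\<^sup>L lborel (\<lambda>x. u' x * w x))"

definition H1 :: "(real \<Rightarrow> real) \<Rightarrow> bool" where
  "H1 u \<longleftrightarrow> (\<exists>u'. H1_with_deriv u u')"

definition norm2 :: "(real \<Rightarrow> real) \<Rightarrow> (real \<Rightarrow> real) \<Rightarrow> real" where
  "norm2 u v = integral\<^sup>L lborel (\<lambda>x. (u x)\<^sup>2) + integral\<^sup>L lborel (\<lambda>x. (v x)\<^sup>2)"

definition P :: "nat \<Rightarrow> real \<Rightarrow> real \<Rightarrow> real \<Rightarrow> real \<Rightarrow> (real \<Rightarrow> real) \<Rightarrow> (real \<Rightarrow> real) \<Rightarrow> real" where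
  "P k a b c d u v = integral\<^sup>L lborel (\<lambda>x. H k a b c d (u x) (v x))"

text \<open>The set \<P>: nonzero pairs in H^1 x H^1 with P(u,v) > 0 (zero as an element of L^2, i.e. a.e.).\<close>
definition in_calP :: "nat \<Rightarrow> real \<Rightarrow> real \<Rightarrow> real \<Rightarrow> real \<Rightarrow> (real \<Rightarrow> real) \<Rightarrow> (real \<Rightarrow> real) \<Rightarrow> bool" where
  "in_calP k a b c d u v \<longleftrightarrow> H1 u \<and> H1 v \<and>
     \<not> (AE x in lborel. u x = 0 \<and> v x = 0) \<and> P k a b c d u v > 0"

definition is_solution :: "nat \<Rightarrow> real \<Rightarrow> real \<Rightarrow> real \<Rightarrow> real \<Rightarrow>
    (real \<Rightarrow> real) \<Rightarrow> (real \<Rightarrow> real) \<Rightarrow> (real \<Rightarrow> real) \<Rightarrow> (real \<Rightarrow> real) \<Rightarrow> bool" where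
  "is_solution k a b c d \<phi> \<phi>' \<psi> \<psi>' \<longleftrightarrow>
     H1_with_deriv \<phi> \<phi>' \<and> H1_with_deriv \<psi> \<psi>' \<and>
     (\<forall>w w'. H1_with_deriv w w' \<longrightarrow>
        integral\<^sup>L lborel (\<lambda>x. \<phi> x * w x + \<phi>' x * w' x - f k a b c d (\<phi> x) (\<psi> x) * w x) = 0) \<and>
     (\<forall>z z'. H1_with_deriv z z' \<longrightarrow>
        integral\<^sup>L lborel (\<lambda>x. \<psi> x * z x + \<psi>' x * z' x - g k a b c d (\<phi> x) (\<psi> x) * z x) = 0)"

end

theory Submission
  imports Defs
begin

text \<open>Testing the weak equations with \<open>(\<phi>, \<psi>)\<close> itself and using Euler's identity
  \<open>u H\<^sub>u + v H\<^sub>v = (2k+2) H\<close> for the homogeneous \<open>H\<close> gives (i). For (ii), the solution is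
  first shown to be classical: by the lemma of du Bois-Reymond an \<open>H\<^sup>1\<close> function has a continuous
  representative whose increments are the integrals of its weak derivative, and feeding this back
  into the equations yields \<open>C\<^sup>2\<close> representatives \<open>U, W\<close> of \<open>\<phi>, \<psi>\<close> with \<open>U'' = U - f(U,W)\<close>,
  \<open>W'' = W - g(U,W)\<close>. Square integrability of \<open>U\<close> and \<open>U'\<close> bounds \<open>U\<close>, so all terms are
  integrable, and the energy \<open>U'\<^sup>2 + W'\<^sup>2 - U\<^sup>2 - W\<^sup>2 + 2 H(U,W)\<close> is constant; being
  integrable over \<open>\<real>\<close> it vanishes, and integrating it gives (ii). The rest is linear algebra.\<close>

section \<open>Smooth functions and bumps\<close>

definition smooth :: "(real \<Rightarrow> real) \<Rightarrow> bool" where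
  "smooth w \<longleftrightarrow> (\<exists>D. D 0 = w \<and> (\<forall>n x. (D n has_real_derivative D (Suc n) x) (at x)))"

lemma test_fun_iff: "test_fun w \<longleftrightarrow> smooth w \<and> (\<exists>R. \<forall>x. R < \<bar>x\<bar> \<longrightarrow> w x = 0)"
  unfolding test_fun_def smooth_def ..

fun n_times_differentiable :: "nat \<Rightarrow> (real \<Rightarrow> real) \<Rightarrow> bool" where
  "n_times_differentiable 0 u = True"
| "n_times_differentiable (Suc n) u \<longleftrightarrow>
     (\<forall>x. u differentiable at x) \<and> n_times_differentiable n (deriv u)"

lemma deriv_eqI: "(\<And>x. (u has_real_derivative u' x) (at x)) \<Longrightarrow> deriv u = u'"
  using DERIV_imp_deriv by blast

lemma n_times_differentiable_funpow:
  "n_times_differentiable (Suc n) u \<Longrightarrow> (deriv ^^ n) u differentiable at x"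
  by (induction n arbitrary: u) (simp_all add: funpow_Suc_right del: funpow.simps)

lemma smooth_iff_n_times_differentiable: "smooth u \<longleftrightarrow> (\<forall>n. n_times_differentiable n u)"
proof
  assume "smooth u"
  then obtain D where "D 0 = u" "\<And>n x. (D n has_real_derivative D (Suc n) x) (at x)"
    unfolding smooth_def by blast
  moreover have "n_times_differentiable n (D m)" if "\<And>n x. (D n has_real_derivative D (Suc n) x) (at x)"
    for n m and D :: "nat \<Rightarrow> real \<Rightarrow> real"
    using that
  proof (induction n arbitrary: m)
    case (Suc n)
    then have "deriv (D m) = D (Suc m)" by (intro deriv_eqI)
    with Suc show ?case by (auto simp: real_differentiable_def)
  qed simp
  ultimately show "\<forall>n. n_times_differentiable n u" by blast
next
  assume "\<forall>n. n_times_differentiable n u"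
  then have "(deriv ^^ n) u differentiable at x" for n x
    using n_times_differentiable_funpow by blast
  then have "((deriv ^^ n) u has_real_derivative (deriv ^^ Suc n) u x) (at x)" for n x
    using DERIV_deriv_iff_real_differentiable by simp
  then show "smooth u" unfolding smooth_def by (intro exI[of _ "\<lambda>n. (deriv ^^ n) u"]) simp
qed

lemma n_times_differentiable_has_deriv:
  "n_times_differentiable (Suc n) u \<Longrightarrow> (u has_real_derivative deriv u x) (at x)"
  using DERIV_deriv_iff_real_differentiable by auto

lemma n_times_differentiable_SucD: "n_times_differentiable (Suc n) u \<Longrightarrow> n_times_differentiable n u"
proof (induction n arbitrary: u)
  case (Suc n)
  then show ?case by (metis n_times_differentiable.simps(2))
qed simp

lemma n_times_differentiable_const: "n_times_differentiable n (\<lambda>x. c)"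
proof (induction n arbitrary: c)
  case (Suc n)
  have "deriv (\<lambda>x. c) = (\<lambda>x. 0)" by (rule deriv_eqI) auto
  with Suc show ?case by simp
qed simp

lemma n_times_differentiable_add:
  "n_times_differentiable n u \<Longrightarrow> n_times_differentiable n v \<Longrightarrow> n_times_differentiable n (\<lambda>x. u x + v x)"
proof (induction n arbitrary: u v)
  case (Suc n)
  note du = n_times_differentiable_has_deriv[OF Suc.prems(1)]
  note dv = n_times_differentiable_has_deriv[OF Suc.prems(2)]
  have "deriv (\<lambda>x. u x + v x) = (\<lambda>x. deriv u x + deriv v x)"
    by (intro deriv_eqI DERIV_add du dv)
  moreover have "(\<lambda>x. u x + v x) differentiable at x" for x
    using DERIV_add[OF du dv] real_differentiable_def by blast
  ultimately show ?case using Suc by simp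
qed simp

lemma n_times_differentiable_mult:
  "n_times_differentiable n u \<Longrightarrow> n_times_differentiable n v \<Longrightarrow> n_times_differentiable n (\<lambda>x. u x * v x)"
proof (induction n arbitrary: u v)
  case (Suc n)
  note du = n_times_differentiable_has_deriv[OF Suc.prems(1)]
  note dv = n_times_differentiable_has_deriv[OF Suc.prems(2)]
  have "deriv (\<lambda>x. u x * v x) = (\<lambda>x. deriv u x * v x + deriv v x * u x)"
    by (intro deriv_eqI DERIV_mult du dv)
  moreover have "(\<lambda>x. u x * v x) differentiable at x" for x
    using DERIV_mult[OF du dv] real_differentiable_def by blast
  moreover have "n_times_differentiable n (\<lambda>x. deriv u x * v x + deriv v x * u x)"
    using Suc by (intro n_times_differentiable_add Suc.IH) (auto intro: n_times_differentiable_SucD)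
  ultimately show ?case by simp
qed simp

lemma n_times_differentiable_affine:
  "n_times_differentiable n u \<Longrightarrow> n_times_differentiable n (\<lambda>x. u (\<alpha> * x + \<beta>))"
proof (induction n arbitrary: u)
  case (Suc n)
  have d: "((\<lambda>x. u (\<alpha> * x + \<beta>)) has_real_derivative deriv u (\<alpha> * x + \<beta>) * \<alpha>) (at x)" for x
    by (rule DERIV_chain2[OF n_times_differentiable_has_deriv[OF Suc.prems]])
       (auto intro!: derivative_eq_intros)
  then have "deriv (\<lambda>x. u (\<alpha> * x + \<beta>)) = (\<lambda>x. deriv u (\<alpha> * x + \<beta>) * \<alpha>)"
    by (rule deriv_eqI)
  moreover have "n_times_differentiable n (\<lambda>x. deriv u (\<alpha> * x + \<beta>) * \<alpha>)"
    using Suc by (intro n_times_differentiable_mult n_times_differentiable_const) auto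
  ultimately show ?case using d real_differentiable_def by auto
qed simp

lemma smooth_const: "smooth (\<lambda>x. c)"
  by (simp add: smooth_iff_n_times_differentiable n_times_differentiable_const)

lemma smooth_add: "smooth u \<Longrightarrow> smooth v \<Longrightarrow> smooth (\<lambda>x. u x + v x)"
  by (simp add: smooth_iff_n_times_differentiable n_times_differentiable_add)

lemma smooth_mult: "smooth u \<Longrightarrow> smooth v \<Longrightarrow> smooth (\<lambda>x. u x * v x)"
  by (simp add: smooth_iff_n_times_differentiable n_times_differentiable_mult)

lemma smooth_diff:
  assumes "smooth u" "smooth v"
  shows "smooth (\<lambda>x. u x - v x)"
proof -
  have "smooth (\<lambda>x. u x + (-1) * v x)" by (intro smooth_add smooth_mult smooth_const assms)
  then show ?thesis by simp
qed

lemma smooth_affine: "smooth u \<Longrightarrow> smooth (\<lambda>x. u (\<alpha> * x + \<beta>))"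
  by (simp add: smooth_iff_n_times_differentiable n_times_differentiable_affine)

lemma smooth_has_derivative: "smooth w \<Longrightarrow> (w has_real_derivative deriv w x) (at x)"
  using n_times_differentiable_has_deriv smooth_iff_n_times_differentiable by blast

lemma smooth_deriv: "smooth w \<Longrightarrow> smooth (deriv w)"
  using smooth_iff_n_times_differentiable n_times_differentiable.simps(2) by blast

lemma smooth_continuous_on: "smooth w \<Longrightarrow> continuous_on S w"
  using smooth_has_derivative DERIV_isCont continuous_at_imp_continuous_on by blast

lemma smooth_primitive:
  assumes "smooth p" "\<And>x. (W has_real_derivative p x) (at x)"
  shows "smooth W"
proof -
  have "deriv W = p" using assms(2) by (rule deriv_eqI)
  then have "n_times_differentiable (Suc n) W" for n
    using assms smooth_iff_n_times_differentiable real_differentiable_def by auto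
  then show ?thesis
    using smooth_iff_n_times_differentiable n_times_differentiable_SucD by blast
qed

definition exp_inv_poly :: "real poly \<Rightarrow> real \<Rightarrow> real" where
  "exp_inv_poly p x = (if 0 < x then poly p (1/x) * exp (-(1/x)) else 0)"

text \<open>\<open>d/dx (p(1/x) exp(-1/x)) = (p - p')(1/x) exp(-1/x) / x\<^sup>2\<close>, so the derivative of
  \<open>exp_inv_poly p\<close> is again of this form, with the polynomial \<open>X\<^sup>2 (p - p')\<close>.\<close>

definition exp_inv_dpoly :: "real poly \<Rightarrow> real poly" where
  "exp_inv_dpoly p = pCons 0 (pCons 0 (p - pderiv p))"

lemma poly_times_exp_neg_tendsto_0: "((\<lambda>s. poly (r::real poly) s * exp (-s)) \<longlongrightarrow> 0) at_top"
proof -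
  have "((\<lambda>s. \<Sum>i\<le>degree r. coeff r i * (s^i / exp s)) \<longlongrightarrow> 0) at_top"
    by (intro tendsto_null_sum tendsto_mult_right_zero tendsto_power_div_exp_0)
  moreover have "poly r s * exp (-s) = (\<Sum>i\<le>degree r. coeff r i * (s^i / exp s))" for s
    by (simp add: poly_altdef exp_minus sum_distrib_right sum_divide_distrib[symmetric]
        divide_inverse mult.assoc)
  ultimately show ?thesis by simp
qed

lemma exp_inv_poly_has_derivative_0: "(exp_inv_poly p has_real_derivative 0) (at 0)"
proof -
  have "((\<lambda>y. exp_inv_poly p y / y) \<longlongrightarrow> 0) (at 0)"
  proof (rule filterlim_split_at_real)
    have "\<forall>\<^sub>F y in at_left 0. exp_inv_poly p y / y = 0"
      using eventually_at_left_real[of "-1" "0::real"]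
      by (rule eventually_mono) (auto simp: exp_inv_poly_def)
    then show "((\<lambda>y. exp_inv_poly p y / y) \<longlongrightarrow> 0) (at_left 0)"
      by (simp add: tendsto_eventually)
  next
    have "((\<lambda>y. poly (pCons 0 p) (inverse y) * exp (- inverse y)) \<longlongrightarrow> 0) (at_right 0)"
      by (rule filterlim_compose[OF poly_times_exp_neg_tendsto_0 filterlim_inverse_at_top_right])
    moreover have "\<forall>\<^sub>F y in at_right 0.
        poly (pCons 0 p) (inverse y) * exp (- inverse y) = exp_inv_poly p y / y"
      using eventually_at_right_real[of "0::real" 1]
      by (rule eventually_mono) (auto simp: exp_inv_poly_def field_simps)
    ultimately show "((\<lambda>y. exp_inv_poly p y / y) \<longlongrightarrow> 0) (at_right 0)"
      using tendsto_cong by fastforce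
  qed
  then show ?thesis by (simp add: has_field_derivative_iff exp_inv_poly_def)
qed

lemma exp_inv_poly_has_derivative:
  "(exp_inv_poly p has_real_derivative exp_inv_poly (exp_inv_dpoly p) x) (at x)"
proof (cases x "0::real" rule: linorder_cases)
  case less
  have "((\<lambda>y. 0) has_real_derivative exp_inv_poly (exp_inv_dpoly p) x) (at x)"
    using less by (simp add: exp_inv_poly_def)
  then show ?thesis
    by (rule has_field_derivative_transform_within_open[of _ _ _ "{..<0}"])
       (use less in \<open>auto simp: exp_inv_poly_def\<close>)
next
  case equal
  then show ?thesis using exp_inv_poly_has_derivative_0 by (simp add: exp_inv_poly_def)
next
  case greater
  have "((\<lambda>y. poly p (1/y)) has_real_derivative poly (pderiv p) (1/x) * (-1/x^2)) (at x)"
    by (rule DERIV_chain2[OF poly_DERIV])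
       (use greater in \<open>auto intro!: derivative_eq_intros simp: power2_eq_square\<close>)
  moreover have "((\<lambda>y. exp (-(1/y))) has_real_derivative exp (-(1/x)) * (1/x^2)) (at x)"
    using greater by (auto intro!: derivative_eq_intros simp: power2_eq_square)
  ultimately have "((\<lambda>y. poly p (1/y) * exp (-(1/y))) has_real_derivative
      exp_inv_poly (exp_inv_dpoly p) x) (at x)"
    using DERIV_mult greater
    by (fastforce simp: exp_inv_poly_def exp_inv_dpoly_def algebra_simps power2_eq_square)
  then show ?thesis
    by (rule has_field_derivative_transform_within_open[of _ _ _ "{0<..}"])
       (use greater in \<open>auto simp: exp_inv_poly_def\<close>)
qed

lemma smooth_exp_inv_poly: "smooth (exp_inv_poly p)"
  unfolding smooth_def
  by (intro exI[of _ "\<lambda>n. exp_inv_poly ((exp_inv_dpoly ^^ n) p)"]) (simp add: exp_inv_poly_has_derivative)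

definition bump :: "real \<Rightarrow> real" where
  "bump t = exp_inv_poly 1 t * exp_inv_poly 1 (1 - t)"

definition unit_bump :: "real \<Rightarrow> real" where
  "unit_bump t = bump t / integral {0..1} bump"

definition smooth_step :: "real \<Rightarrow> real" where
  "smooth_step t = integral {-1..t} unit_bump"

lemma smooth_bump: "smooth bump"
proof -
  have "smooth (\<lambda>t. exp_inv_poly 1 t * exp_inv_poly 1 ((-1) * t + 1))"
    by (intro smooth_mult smooth_affine smooth_exp_inv_poly)
  then show ?thesis unfolding bump_def by simp
qed

lemma bump_eq_0: "t \<le> 0 \<or> 1 \<le> t \<Longrightarrow> bump t = 0"
  by (auto simp: bump_def exp_inv_poly_def)

lemma integral_bump_pos: "integral {0..1} bump > 0"
proof -
  have cont: "continuous_on {0..1} bump" using smooth_bump smooth_continuous_on by blast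
  have nonneg: "bump t \<ge> 0" for t by (simp add: bump_def exp_inv_poly_def)
  have "bump (1/2) > 0" by (simp add: bump_def exp_inv_poly_def)
  then have "integral {0..1} bump \<noteq> 0"
    using integral_eq_0_iff[OF cont] nonneg by force
  moreover have "integral {0..1} bump \<ge> 0"
    using integrable_continuous_interval[OF cont] nonneg by (simp add: integral_nonneg)
  ultimately show ?thesis by simp
qed

lemma smooth_unit_bump: "smooth unit_bump"
  using smooth_mult[OF smooth_bump smooth_const, of "1 / integral {0..1} bump"]
  unfolding unit_bump_def by simp

lemma unit_bump_nonneg: "unit_bump t \<ge> 0"
  using integral_bump_pos by (simp add: unit_bump_def bump_def exp_inv_poly_def)

lemma unit_bump_eq_0: "t \<le> 0 \<or> 1 \<le> t \<Longrightarrow> unit_bump t = 0"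
  by (simp add: unit_bump_def bump_eq_0)

lemma unit_bump_continuous_on: "continuous_on S unit_bump"
  using smooth_continuous_on smooth_unit_bump by blast

lemma unit_bump_integrable_on: "unit_bump integrable_on {a..b}"
  by (rule integrable_continuous_interval) (rule unit_bump_continuous_on)

lemma integral_unit_bump_eq_0:
  assumes "b \<le> 0 \<or> 1 \<le> a"
  shows "integral {a..b} unit_bump = 0"
proof -
  have "integral {a..b} unit_bump = integral {a..b} (\<lambda>_. 0)"
    using assms by (intro integral_cong unit_bump_eq_0) auto
  then show ?thesis by simp
qed

lemma integral_unit_bump: "a \<le> 0 \<Longrightarrow> 1 \<le> b \<Longrightarrow> integral {a..b} unit_bump = 1"
proof -
  assume ab: "a \<le> 0" "1 \<le> b"
  have "integral {a..b} unit_bump = integral {a..0} unit_bump + integral {0..1} unit_bump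
      + integral {1..b} unit_bump"
    using ab by (simp add: Henstock_Kurzweil_Integration.integral_combine unit_bump_integrable_on)
  also have "integral {0..1} unit_bump = 1"
    using integral_bump_pos unfolding unit_bump_def by simp
  finally show ?thesis by (simp add: integral_unit_bump_eq_0)
qed

lemma integral_from_has_real_derivative:
  assumes "continuous_on UNIV p" "\<And>t. t \<le> a \<Longrightarrow> p t = 0" "b < a"
  shows "((\<lambda>t. integral {b..t} p) has_real_derivative p x) (at x)"
proof (cases "x < a")
  case True
  have "integral {b..t} p = integral {b..t} (\<lambda>_. 0)" if "t < a" for t
    by (rule integral_cong) (use that assms(2) in auto)
  then have eq: "integral {b..t} p = 0" if "t \<in> {..<a}" for t
    using that by simp
  have "((\<lambda>t. 0) has_real_derivative p x) (at x)" using True assms(2) by simp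
  then show ?thesis
    by (rule has_field_derivative_transform_within_open[of _ _ _ "{..<a}"]) (use True eq in auto)
next
  case False
  have "((\<lambda>t. integral {b..t} p) has_real_derivative p x) (at x within {b..x+1})"
    by (rule integral_has_real_derivative[OF continuous_on_subset[OF assms(1)]])
       (use False assms(3) in auto)
  moreover have "at x within {b..x+1} = at x"
    by (rule at_within_interior) (use False assms(3) in auto)
  ultimately show ?thesis by simp
qed

lemma smooth_step_has_derivative: "(smooth_step has_real_derivative unit_bump x) (at x)"
  unfolding smooth_step_def
  by (rule integral_from_has_real_derivative[where a = 0]) (auto simp: unit_bump_continuous_on unit_bump_eq_0)

lemma smooth_smooth_step: "smooth smooth_step"
  using smooth_primitive[OF smooth_unit_bump smooth_step_has_derivative] .

lemma smooth_step_eq_0: "t \<le> 0 \<Longrightarrow> smooth_step t = 0"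
  unfolding smooth_step_def by (rule integral_unit_bump_eq_0) auto

lemma smooth_step_eq_1: "1 \<le> t \<Longrightarrow> smooth_step t = 1"
  unfolding smooth_step_def by (rule integral_unit_bump) auto

lemma smooth_step_bounds: "0 \<le> smooth_step t" "smooth_step t \<le> 1"
proof -
  show "0 \<le> smooth_step t"
    unfolding smooth_step_def
    by (cases "-1 \<le> t") (auto intro!: integral_nonneg unit_bump_integrable_on unit_bump_nonneg)
  show "smooth_step t \<le> 1"
  proof (cases "1 \<le> t")
    case False
    then have "smooth_step t \<le> integral {-1..1} unit_bump"
      unfolding smooth_step_def
      by (intro integral_subset_le unit_bump_integrable_on) (auto simp: unit_bump_nonneg)
    then show ?thesis by (simp add: integral_unit_bump)
  qed (simp add: smooth_step_eq_1)
qed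

section \<open>Test functions and locally integrable functions\<close>

lemma test_fun_smooth: "test_fun w \<Longrightarrow> smooth w"
  by (simp add: test_fun_iff)

lemma test_funI: "smooth w \<Longrightarrow> (\<And>x. R < \<bar>x\<bar> \<Longrightarrow> w x = 0) \<Longrightarrow> test_fun w"
  unfolding test_fun_iff by blast

lemma test_fun_support:
  assumes "test_fun w"
  obtains R where "0 < R" "\<And>x. R < \<bar>x\<bar> \<Longrightarrow> w x = 0" "\<And>x. R < \<bar>x\<bar> \<Longrightarrow> deriv w x = 0"
proof -
  obtain R0 where R0: "\<And>x. R0 < \<bar>x\<bar> \<Longrightarrow> w x = 0" using assms unfolding test_fun_iff by blast
  define R where "R = \<bar>R0\<bar> + 1"
  have w0: "w x = 0" if "R < \<bar>x\<bar>" for x using R0 R_def that by force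
  have "deriv w x = 0" if "R < \<bar>x\<bar>" for x
  proof -
    have op: "open {y::real. R < \<bar>y\<bar>}" by (intro open_Collect_less continuous_intros)
    have "((\<lambda>_. 0) has_real_derivative 0) (at x)" by simp
    then have "(w has_real_derivative 0) (at x)"
      by (rule has_field_derivative_transform_within_open[OF _ op]) (use that w0 in auto)
    then show ?thesis by (rule DERIV_imp_deriv)
  qed
  with w0 show ?thesis by (intro that[of R]) (auto simp: R_def)
qed

lemma test_fun_deriv: "test_fun w \<Longrightarrow> test_fun (deriv w)"
  by (metis test_funI test_fun_smooth smooth_deriv test_fun_support)

lemma test_fun_has_derivative: "test_fun w \<Longrightarrow> (w has_real_derivative deriv w x) (at x)"
  using smooth_has_derivative test_fun_smooth by blast

lemma test_fun_continuous_on: "test_fun w \<Longrightarrow> continuous_on S w"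
  using smooth_continuous_on test_fun_smooth by blast

lemma test_fun_borel_measurable: "test_fun w \<Longrightarrow> w \<in> borel_measurable borel"
  using test_fun_continuous_on borel_measurable_continuous_onI by blast

lemma bounded_if_continuous_vanishing:
  fixes w :: "real \<Rightarrow> real"
  assumes "continuous_on UNIV w" "\<And>x. R < \<bar>x\<bar> \<Longrightarrow> w x = 0"
  obtains B where "\<And>x. \<bar>w x\<bar> \<le> B"
proof -
  have "compact (w ` {-R..R})"
    by (rule compact_continuous_image[OF continuous_on_subset[OF assms(1)] compact_Icc]) simp
  then obtain B where B: "\<forall>y\<in>w ` {-R..R}. \<bar>y\<bar> \<le> B"
    using compact_imp_bounded bounded_iff real_norm_def by metis
  have "\<bar>w x\<bar> \<le> max B 0" for x
  proof (cases "R < \<bar>x\<bar>")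
    case False
    then have "x \<in> {-R..R}" by auto
    then show ?thesis using B by (simp add: max.coboundedI1)
  qed (simp add: assms(2))
  then show ?thesis by (rule that)
qed

lemma test_fun_bounded:
  assumes "test_fun w"
  obtains B where "\<And>x. \<bar>w x\<bar> \<le> B"
  using test_fun_support[OF assms] bounded_if_continuous_vanishing test_fun_continuous_on[OF assms]
  by metis

lemma integral_lborel_eq_integral_Icc:
  fixes p :: "real \<Rightarrow> real"
  assumes "continuous_on UNIV p" "\<And>x. x \<notin> {\<alpha>..\<beta>} \<Longrightarrow> p x = 0"
  shows "integrable lborel p" "integral\<^sup>L lborel p = integral {\<alpha>..\<beta>} p"
proof -
  have eq: "p = (\<lambda>x. indicator {\<alpha>..\<beta>} x *\<^sub>R p x)"
    using assms(2) by (auto simp: indicator_def fun_eq_iff)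
  have si: "set_integrable lborel {\<alpha>..\<beta>} p"
    unfolding set_integrable_def
    using borel_integrable_compact[OF compact_Icc continuous_on_subset[OF assms(1)]] by simp
  then show "integrable lborel p"
    unfolding set_integrable_def by (subst eq)
  have "integral\<^sup>L lborel p = (LINT x:{\<alpha>..\<beta>}|lborel. p x)"
    unfolding set_lebesgue_integral_def by (subst eq) simp
  also have "\<dots> = integral {\<alpha>..\<beta>} p" by (rule set_borel_integral_eq_integral(2)[OF si])
  finally show "integral\<^sup>L lborel p = integral {\<alpha>..\<beta>} p" .
qed

lemma test_fun_integrable:
  assumes "test_fun w"
  shows "integrable lborel w"
proof -
  obtain R where R: "\<And>x. R < \<bar>x\<bar> \<Longrightarrow> w x = 0" using test_fun_support[OF assms] by metis
  show ?thesis
    by (rule integral_lborel_eq_integral_Icc(1)[OF test_fun_continuous_on[OF assms], of "-R" R])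
       (use R in auto)
qed

lemma integral_deriv_eq_0:
  assumes "\<And>x. (F has_real_derivative F' x) (at x)" "continuous_on UNIV F'"
    "\<And>x. R < \<bar>x\<bar> \<Longrightarrow> F x = 0" "\<And>x. R < \<bar>x\<bar> \<Longrightarrow> F' x = 0"
  shows "integral\<^sup>L lborel F' = 0"
proof -
  define S where "S = \<bar>R\<bar> + 1"
  have "integral\<^sup>L lborel F' = integral {-S..S} F'"
    by (rule integral_lborel_eq_integral_Icc(2)[OF assms(2)]) (use assms(4) S_def in auto)
  also have "(F' has_integral (F S - F (-S))) {-S..S}"
    by (rule fundamental_theorem_of_calculus)
       (use assms(1) S_def in \<open>auto simp: has_real_derivative_iff_has_vector_derivative
         intro: has_vector_derivative_at_within\<close>)
  then have "integral {-S..S} F' = F S - F (-S)" by (rule integral_unique)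
  also have "\<dots> = 0" using assms(3) S_def by simp
  finally show ?thesis .
qed

definition locally_integrable :: "(real \<Rightarrow> real) \<Rightarrow> bool" where
  "locally_integrable v \<longleftrightarrow>
     v \<in> borel_measurable borel \<and> (\<forall>a b. integrable lborel (\<lambda>x. indicator {a..b} x * v x))"

lemma abs_le_1_plus_square: "\<bar>y\<bar> \<le> 1 + (y::real)^2"
proof (cases "\<bar>y\<bar> \<le> 1")
  case True
  then show ?thesis using zero_le_power2[of y] by linarith
next
  case False
  then have "\<bar>y\<bar> * 1 \<le> \<bar>y\<bar> * \<bar>y\<bar>" by (intro mult_left_mono) auto
  then show ?thesis by (simp add: power2_eq_square)
qed

lemma locally_integrable_if_L2: "L2 v \<Longrightarrow> locally_integrable v"
proof -
  assume "L2 v"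
  then have m[measurable]: "v \<in> borel_measurable borel" and i: "integrable lborel (\<lambda>x. (v x)^2)"
    by (auto simp: L2_def)
  have "integrable lborel (\<lambda>x. indicator {a..b} x * v x)" for a b
  proof (rule Bochner_Integration.integrable_bound)
    show "integrable lborel (\<lambda>x. indicator {a..b} x + (v x)^2 :: real)"
      using borel_integrable_compact[of "{a..b}" "\<lambda>_. 1::real"] by (intro Bochner_Integration.integrable_add i) simp
    show "AE x in lborel. norm (indicator {a..b} x * v x) \<le> norm (indicator {a..b} x + (v x)^2)"
      using abs_le_1_plus_square by (auto split: split_indicator)
  qed measurable
  then show ?thesis using m by (simp add: locally_integrable_def)
qed

lemma locally_integrable_continuous:
  assumes "continuous_on UNIV v"
  shows "locally_integrable v"
proof -
  have "integrable lborel (\<lambda>x. indicator {a..b} x *\<^sub>R v x)" for a b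
    by (rule borel_integrable_compact[OF compact_Icc continuous_on_subset[OF assms]]) simp
  then show ?thesis
    using borel_measurable_continuous_onI[OF assms] by (simp add: locally_integrable_def)
qed

lemma locally_integrable_diff:
  assumes "locally_integrable u" "locally_integrable v"
  shows "locally_integrable (\<lambda>x. u x - v x)"
proof -
  have "integrable lborel (\<lambda>x. indicator {a..b} x * u x - indicator {a..b} x * v x)" for a b
    using assms unfolding locally_integrable_def by (intro Bochner_Integration.integrable_diff) auto
  moreover have "(\<lambda>x. u x - v x) \<in> borel_measurable borel"
    using assms by (intro borel_measurable_diff) (simp_all add: locally_integrable_def)
  ultimately show ?thesis
    unfolding locally_integrable_def by (simp add: right_diff_distrib)
qed

lemma locally_integrable_mult_bounded:
  assumes "locally_integrable v" "b \<in> borel_measurable borel"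
    and "\<And>x. \<bar>b x\<bar> \<le> B" "\<And>x. R < \<bar>x\<bar> \<Longrightarrow> b x = 0"
  shows "integrable lborel (\<lambda>x. v x * b x)"
proof (rule Bochner_Integration.integrable_bound)
  have [measurable]: "v \<in> borel_measurable borel" "b \<in> borel_measurable borel"
    using assms by (auto simp: locally_integrable_def)
  show "integrable lborel (\<lambda>x. B * \<bar>indicator {-R..R} x * v x\<bar>)"
    using assms(1) unfolding locally_integrable_def by (intro integrable_mult_right integrable_abs) auto
  show "(\<lambda>x. v x * b x) \<in> borel_measurable lborel" by measurable
  have B: "0 \<le> B" using assms(3)[of 0] by linarith
  have "\<bar>v x * b x\<bar> \<le> B * \<bar>indicator {-R..R} x * v x\<bar>" for x
  proof (cases "R < \<bar>x\<bar>")
    case False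
    then have "indicator {-R..R} x = (1::real)" by (auto simp: indicator_def)
    then show ?thesis
      using mult_left_mono[OF assms(3)[of x], of "\<bar>v x\<bar>"] by (simp add: abs_mult mult.commute)
  qed (simp add: assms(4) B)
  then show "AE x in lborel. norm (v x * b x) \<le> norm (B * \<bar>indicator {-R..R} x * v x\<bar>)"
    using B by (simp add: abs_mult)
qed

lemma locally_integrable_mult_test:
  assumes "locally_integrable v" "test_fun w"
  shows "integrable lborel (\<lambda>x. v x * w x)"
proof -
  obtain R where "\<And>x. R < \<bar>x\<bar> \<Longrightarrow> w x = 0" using test_fun_support[OF assms(2)] by metis
  moreover obtain B where "\<And>x. \<bar>w x\<bar> \<le> B" using test_fun_bounded[OF assms(2)] by metis
  ultimately show ?thesis
    using locally_integrable_mult_bounded[OF assms(1) test_fun_borel_measurable[OF assms(2)]] by blast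
qed

lemma locally_integrable_integral_Icc:
  assumes "locally_integrable v"
  shows "v integrable_on {a..b}"
    and "integral\<^sup>L lborel (\<lambda>x. indicator {a..b} x * v x) = integral {a..b} v"
proof -
  have si: "set_integrable lborel {a..b} v"
    using assms unfolding locally_integrable_def set_integrable_def by simp
  show "v integrable_on {a..b}" using set_borel_integral_eq_integral(1)[OF si] .
  show "integral\<^sup>L lborel (\<lambda>x. indicator {a..b} x * v x) = integral {a..b} v"
    using set_borel_integral_eq_integral(2)[OF si] unfolding set_lebesgue_integral_def by simp
qed

lemma integral_Icc_cong_AE:
  assumes "locally_integrable u" "locally_integrable v" "AE x in lborel. u x = v x"
  shows "integral {a..b} u = integral {a..b} v"
proof -
  have [measurable]: "u \<in> borel_measurable borel" "v \<in> borel_measurable borel"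
    using assms by (auto simp: locally_integrable_def)
  have "integral\<^sup>L lborel (\<lambda>t. indicator {a..b} t * u t) = integral\<^sup>L lborel (\<lambda>t. indicator {a..b} t * v t)"
    by (rule integral_cong_AE) (use assms(3) in auto)
  then show ?thesis using locally_integrable_integral_Icc(2) assms(1,2) by metis
qed

lemma test_fun_H1_with_deriv:
  assumes "test_fun w"
  shows "H1_with_deriv w (deriv w)"
proof -
  have w': "test_fun (deriv w)" by (rule test_fun_deriv[OF assms])
  have lw: "locally_integrable w" "locally_integrable (deriv w)"
    using assms w' test_fun_continuous_on locally_integrable_continuous by blast+
  have "L2 w" "L2 (deriv w)"
    using locally_integrable_mult_test[OF lw(1) assms] locally_integrable_mult_test[OF lw(2) w']
      test_fun_borel_measurable[OF assms] test_fun_borel_measurable[OF w']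
    by (auto simp: L2_def power2_eq_square)
  moreover have "integral\<^sup>L lborel (\<lambda>x. w x * deriv z x) = - integral\<^sup>L lborel (\<lambda>x. deriv w x * z x)"
    if z: "test_fun z" for z
  proof -
    obtain R where R: "\<And>x. R < \<bar>x\<bar> \<Longrightarrow> w x = 0" "\<And>x. R < \<bar>x\<bar> \<Longrightarrow> deriv w x = 0"
      using test_fun_support[OF assms] by metis
    have "((\<lambda>x. w x * z x) has_real_derivative deriv w x * z x + w x * deriv z x) (at x)" for x
      using DERIV_mult[OF test_fun_has_derivative[OF assms] test_fun_has_derivative[OF z]]
      by (simp add: algebra_simps)
    moreover have "continuous_on UNIV (\<lambda>x. deriv w x * z x + w x * deriv z x)"
      using assms w' z test_fun_deriv[OF z]
      by (intro continuous_intros) (simp_all add: test_fun_continuous_on)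
    ultimately have "integral\<^sup>L lborel (\<lambda>x. deriv w x * z x + w x * deriv z x) = 0"
      by (rule integral_deriv_eq_0[where R = R]) (simp_all add: R)
    then show ?thesis
      using locally_integrable_mult_test[OF lw(1) test_fun_deriv[OF z]]
        locally_integrable_mult_test[OF lw(2) z] by simp
  qed
  ultimately show ?thesis unfolding H1_with_deriv_def by blast
qed

lemma H1_with_derivD:
  assumes "H1_with_deriv u u'"
  shows "locally_integrable u" "locally_integrable u'"
    "u \<in> borel_measurable borel" "u' \<in> borel_measurable borel"
    "integrable lborel (\<lambda>x. (u x)^2)" "integrable lborel (\<lambda>x. (u' x)^2)"
    "\<And>w. test_fun w \<Longrightarrow> integral\<^sup>L lborel (\<lambda>x. u x * deriv w x) = - integral\<^sup>L lborel (\<lambda>x. u' x * w x)"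
  using assms locally_integrable_if_L2 unfolding H1_with_deriv_def L2_def by auto

section \<open>The lemma of du Bois-Reymond\<close>

lemma AE_eq_if_integrals_greaterThan_eq:
  fixes u v :: "real \<Rightarrow> real"
  assumes [measurable]: "u \<in> borel_measurable borel" "v \<in> borel_measurable borel"
    and "integrable lborel u" "integrable lborel v" "\<And>t. 0 \<le> u t" "\<And>t. 0 \<le> v t"
    and eq: "\<And>x. integral\<^sup>L lborel (\<lambda>t. u t * indicator {x<..} t) = integral\<^sup>L lborel (\<lambda>t. v t * indicator {x<..} t)"
  shows "AE t in lborel. u t = v t"
proof -
  have emeasure_density: "emeasure (density lborel f) {x<..} = integral\<^sup>L lborel (\<lambda>t. f t * indicator {x<..} t)"
    if [measurable]: "f \<in> borel_measurable borel" and "integrable lborel f" "\<And>t. 0 \<le> f t"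
    for f :: "real \<Rightarrow> real" and x :: real
  proof -
    have "emeasure (density lborel f) {x<..} = (\<integral>\<^sup>+ t. ennreal (f t * indicator {x<..} t) \<partial>lborel)"
      using borel_open[OF open_greaterThan[of x]]
      by (subst emeasure_density) (auto intro!: nn_integral_cong simp: indicator_def)
    also have "\<dots> = integral\<^sup>L lborel (\<lambda>t. f t * indicator {x<..} t)"
      using that by (intro nn_integral_eq_integral integrable_real_mult_indicator) auto
    finally show ?thesis .
  qed
  have "density lborel u = density lborel v"
    by (rule measure_eqI_lessThan) (simp_all add: emeasure_density assms)
  moreover have "(\<integral>\<^sup>+ t. ennreal (u t) \<partial>lborel) \<noteq> \<infinity>"
    using nn_integral_eq_integral[OF assms(3)] assms(5) by simp
  ultimately have "AE t in lborel. ennreal (u t) = ennreal (v t)"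
    by (intro finite_density_unique[THEN iffD1]) auto
  then show ?thesis
    by eventually_elim (use assms(5,6) in simp)
qed

lemma AE_eq_0_on_Ioc_if_integrals_Ioc_eq_0:
  assumes v: "locally_integrable v"
    and zero: "\<And>x y. x < y \<Longrightarrow> integral\<^sup>L lborel (\<lambda>t. indicator {x<..y} t * v t) = 0"
  shows "AE t in lborel. t \<in> {-N<..N} \<longrightarrow> v t = 0"
proof -
  have [measurable]: "v \<in> borel_measurable borel" using v by (simp add: locally_integrable_def)
  define gp where "gp t = max 0 (v t) * indicator {-N<..N} t" for t
  define gn where "gn t = max 0 (- v t) * indicator {-N<..N} t" for t
  have meas[measurable]: "gp \<in> borel_measurable borel" "gn \<in> borel_measurable borel"
    unfolding gp_def gn_def by measurable
  have gi: "integrable lborel (\<lambda>t. indicator {-N..N} t * v t)"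
    using v by (simp add: locally_integrable_def)
  have ip: "integrable lborel gp"
    by (rule Bochner_Integration.integrable_bound[OF gi]) (auto simp: gp_def split: split_indicator)
  have ineg: "integrable lborel gn"
    by (rule Bochner_Integration.integrable_bound[OF gi]) (auto simp: gn_def split: split_indicator)
  have eq: "integral\<^sup>L lborel (\<lambda>t. gp t * indicator {x<..} t) = integral\<^sup>L lborel (\<lambda>t. gn t * indicator {x<..} t)"
    for x
  proof -
    have "integrable lborel (\<lambda>t. gp t * indicator {x<..} t)"
      "integrable lborel (\<lambda>t. gn t * indicator {x<..} t)"
      using ip ineg by (auto intro: integrable_real_mult_indicator)
    then have "integral\<^sup>L lborel (\<lambda>t. gp t * indicator {x<..} t) - integral\<^sup>L lborel (\<lambda>t. gn t * indicator {x<..} t)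
        = integral\<^sup>L lborel (\<lambda>t. gp t * indicator {x<..} t - gn t * indicator {x<..} t)"
      by simp
    also have "(\<lambda>t. gp t * indicator {x<..} t - gn t * indicator {x<..} t)
        = (\<lambda>t. indicator {max x (-N)<..N} t * v t)"
      by (auto simp: gp_def gn_def fun_eq_iff split: split_indicator)
    also have "integral\<^sup>L lborel \<dots> = 0"
      using zero[of "max x (-N)" N] by (cases "max x (-N) < N") auto
    finally show ?thesis by simp
  qed
  have "AE t in lborel. gp t = gn t"
    by (rule AE_eq_if_integrals_greaterThan_eq[OF meas ip ineg _ _ eq]) (simp_all add: gp_def gn_def)
  then show ?thesis
    by eventually_elim (auto simp: gp_def gn_def max_def split: if_splits)
qed

lemma AE_eq_0_if_integrals_Ioc_eq_0:
  assumes v: "locally_integrable v"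
    and zero: "\<And>x y. x < y \<Longrightarrow> integral\<^sup>L lborel (\<lambda>t. indicator {x<..y} t * v t) = 0"
  shows "AE t in lborel. v t = 0"
proof -
  have "AE t in lborel. \<forall>n::nat. t \<in> {-real n<..real n} \<longrightarrow> v t = 0"
    using AE_eq_0_on_Ioc_if_integrals_Ioc_eq_0[OF v zero] by (subst AE_all_countable) blast
  then show ?thesis
  proof eventually_elim
    case (elim t)
    obtain n :: nat where "\<bar>t\<bar> < real n" using reals_Archimedean2 by blast
    then have "t \<in> {-real n<..real n}" by auto
    with elim show ?case by blast
  qed
qed

definition interval_bump :: "real \<Rightarrow> real \<Rightarrow> nat \<Rightarrow> real \<Rightarrow> real" where
  "interval_bump x y n t = smooth_step ((t - x) * (real n + 1)) - smooth_step ((t - y) * (real n + 1))"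

lemma eventually_one_le_mult_Suc:
  fixes d :: real
  assumes "0 < d"
  shows "\<forall>\<^sub>F n in sequentially. 1 \<le> d * (real n + 1)"
proof -
  obtain N :: nat where "1 / d < real N" using reals_Archimedean2 by blast
  then have N: "1 < d * real N" using assms by (simp add: divide_less_eq mult.commute)
  have "1 \<le> d * (real n + 1)" if "N \<le> n" for n
  proof -
    have "real N \<le> real n + 1" using that by simp
    from mult_left_mono[OF this, of d] assms have "d * real N \<le> d * (real n + 1)" by simp
    with N show ?thesis by linarith
  qed
  then show ?thesis unfolding eventually_sequentially by blast
qed

lemma interval_bump_tendsto:
  assumes "x < y"
  shows "(\<lambda>n. interval_bump x y n t) \<longlonglongrightarrow> indicator {x<..y} t"
proof -
  consider "t \<le> x" | "x < t" "t \<le> y" | "y < t" by linarith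
  then show ?thesis
  proof cases
    case 1
    then have "interval_bump x y n t = 0" for n
      using assms by (simp add: interval_bump_def smooth_step_eq_0 mult_nonpos_nonneg)
    with 1 show ?thesis by simp
  next
    case 2
    have "\<forall>\<^sub>F n in sequentially. 1 \<le> (t - x) * (real n + 1)"
      using 2 by (intro eventually_one_le_mult_Suc) simp
    then have "\<forall>\<^sub>F n in sequentially. interval_bump x y n t = 1"
      by eventually_elim
         (use 2 in \<open>simp add: interval_bump_def smooth_step_eq_0 smooth_step_eq_1 mult_nonpos_nonneg\<close>)
    with 2 show ?thesis by (simp add: tendsto_eventually)
  next
    case 3
    have "\<forall>\<^sub>F n in sequentially. 1 \<le> (t - y) * (real n + 1)"
      using 3 by (intro eventually_one_le_mult_Suc) simp
    then have "\<forall>\<^sub>F n in sequentially. interval_bump x y n t = 0"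
    proof eventually_elim
      case (elim n)
      moreover have "(t - y) * (real n + 1) \<le> (t - x) * (real n + 1)"
        using assms by (intro mult_right_mono) auto
      ultimately have "1 \<le> (t - x) * (real n + 1)" by linarith
      with elim show ?case by (simp add: interval_bump_def smooth_step_eq_1)
    qed
    with 3 show ?thesis by (simp add: tendsto_eventually)
  qed
qed

lemma interval_bump_eq_0:
  assumes "x < y" "t \<notin> {x..y+1}"
  shows "interval_bump x y n t = 0"
proof (cases "t < x")
  case True
  then show ?thesis using assms by (simp add: interval_bump_def smooth_step_eq_0 mult_nonpos_nonneg)
next
  case False
  then have "1 \<le> t - y" using assms by auto
  moreover have "t - y \<le> (t - y) * (real n + 1)"
    using \<open>1 \<le> t - y\<close> mult_left_mono[of 1 "real n + 1" "t - y"] by simp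
  moreover have "(t - y) * (real n + 1) \<le> (t - x) * (real n + 1)"
    using assms by (intro mult_right_mono) auto
  ultimately have "1 \<le> (t - y) * (real n + 1)" "1 \<le> (t - x) * (real n + 1)" by linarith+
  then show ?thesis by (simp add: interval_bump_def smooth_step_eq_1)
qed

lemma abs_interval_bump_le_1: "\<bar>interval_bump x y n t\<bar> \<le> 1"
  using smooth_step_bounds[of "(t - x) * (real n + 1)"] smooth_step_bounds[of "(t - y) * (real n + 1)"]
  unfolding interval_bump_def by linarith

lemma test_fun_interval_bump:
  assumes "x < y"
  shows "test_fun (interval_bump x y n)"
proof (rule test_funI)
  define e where "e = real n + 1"
  have "smooth (\<lambda>t. smooth_step (e * t + - x * e) - smooth_step (e * t + - y * e))"
    by (intro smooth_diff smooth_affine smooth_smooth_step)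
  then show "smooth (interval_bump x y n)"
    unfolding interval_bump_def e_def[symmetric] by (simp add: algebra_simps)
  show "interval_bump x y n t = 0" if "\<bar>x\<bar> + \<bar>y\<bar> + 2 < \<bar>t\<bar>" for t
    using that by (intro interval_bump_eq_0 assms) auto
qed

lemma AE_eq_0_if_orthogonal_test_funs:
  assumes v: "locally_integrable v" and zero: "\<And>w. test_fun w \<Longrightarrow> integral\<^sup>L lborel (\<lambda>t. v t * w t) = 0"
  shows "AE t in lborel. v t = 0"
proof (rule AE_eq_0_if_integrals_Ioc_eq_0[OF v])
  fix x y :: real assume xy: "x < y"
  have [measurable]: "v \<in> borel_measurable borel" using v by (simp add: locally_integrable_def)
  have [measurable]: "interval_bump x y n \<in> borel_measurable borel" for n
    by (rule test_fun_borel_measurable[OF test_fun_interval_bump[OF xy]])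
  have "(\<lambda>n. integral\<^sup>L lborel (\<lambda>t. v t * interval_bump x y n t))
      \<longlonglongrightarrow> integral\<^sup>L lborel (\<lambda>t. indicator {x<..y} t * v t)"
  proof (rule integral_dominated_convergence[where w = "\<lambda>t. \<bar>indicator {x..y+1} t * v t\<bar>"])
    show "integrable lborel (\<lambda>t. \<bar>indicator {x..y+1} t * v t\<bar>)"
      using v unfolding locally_integrable_def by (intro integrable_abs) auto
    show "AE t in lborel. (\<lambda>n. v t * interval_bump x y n t) \<longlonglongrightarrow> indicator {x<..y} t * v t"
      using tendsto_mult[OF tendsto_const interval_bump_tendsto[OF xy]] by (simp add: mult.commute)
    show "AE t in lborel. norm (v t * interval_bump x y n t) \<le> \<bar>indicator {x..y+1} t * v t\<bar>" for n
    proof (intro AE_I2)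
      fix t
      show "norm (v t * interval_bump x y n t) \<le> \<bar>indicator {x..y+1} t * v t\<bar>"
      proof (cases "t \<in> {x..y+1}")
        case True
        then show ?thesis
          using mult_left_mono[OF abs_interval_bump_le_1, of "\<bar>v t\<bar>" x y n t] by (simp add: abs_mult)
      qed (simp add: interval_bump_eq_0[OF xy])
    qed
  qed measurable
  moreover have "integral\<^sup>L lborel (\<lambda>t. v t * interval_bump x y n t) = 0" for n
    by (rule zero[OF test_fun_interval_bump[OF xy]])
  ultimately have "(\<lambda>n. 0) \<longlonglongrightarrow> integral\<^sup>L lborel (\<lambda>t. indicator {x<..y} t * v t)"
    by simp
  from LIMSEQ_unique[OF tendsto_const this]
  show "integral\<^sup>L lborel (\<lambda>t. indicator {x<..y} t * v t) = 0" by simp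
qed

lemma test_fun_primitive:
  assumes "test_fun p"
  obtains W where "test_fun W" "\<And>x. deriv W x = p x - integral\<^sup>L lborel p * unit_bump x"
proof -
  obtain R where R: "0 < R" "\<And>x. R < \<bar>x\<bar> \<Longrightarrow> p x = 0" using test_fun_support[OF assms] by metis
  define c where "c = integral\<^sup>L lborel p"
  define q where "q x = p x - c * unit_bump x" for x
  define W where "W t = integral {-R-2..t} q" for t
  have sq: "smooth q"
    unfolding q_def by (intro smooth_diff smooth_mult smooth_const test_fun_smooth assms smooth_unit_bump)
  have q0: "q t = 0" if "t \<le> -R-1" for t
    using that R unit_bump_eq_0[of t] by (simp add: q_def)
  have dW: "(W has_real_derivative q x) (at x)" for x
    unfolding W_def by (rule integral_from_has_real_derivative[OF smooth_continuous_on[OF sq] q0]) auto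
  have pint: "p integrable_on {a..b}" for a b
    by (rule integrable_continuous_interval[OF test_fun_continuous_on[OF assms]])
  have "W t = 0" if "R + 2 < \<bar>t\<bar>" for t
  proof (cases "t < -R-1")
    case True
    have "integral {-R-2..t} q = integral {-R-2..t} (\<lambda>_. 0)"
      by (rule integral_cong) (use True q0 in auto)
    then show ?thesis by (simp add: W_def)
  next
    case False
    then have t: "R + 1 < t" using that R(1) by auto
    have "W t = integral {-R-2..t} p - integral {-R-2..t} (\<lambda>x. c * unit_bump x)"
      unfolding W_def q_def
      by (rule Henstock_Kurzweil_Integration.integral_diff[OF pint])
         (rule integrable_on_mult_right[OF unit_bump_integrable_on])
    also have "integral {-R-2..t} (\<lambda>x. c * unit_bump x) = c * integral {-R-2..t} unit_bump"
      by simp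
    also have "integral {-R-2..t} p = c"
      unfolding c_def using R t
      by (intro integral_lborel_eq_integral_Icc(2)[OF test_fun_continuous_on[OF assms], symmetric]) auto
    also have "integral {-R-2..t} unit_bump = 1"
      using R t by (intro integral_unit_bump) auto
    finally show ?thesis by simp
  qed
  then have "test_fun W" by (intro test_funI[of W "R + 2"] smooth_primitive[OF sq dW])
  moreover have "deriv W x = p x - c * unit_bump x" for x
    using DERIV_imp_deriv[OF dW] by (simp add: q_def)
  ultimately show ?thesis using that c_def by blast
qed

lemma du_Bois_Reymond:
  assumes h: "locally_integrable h"
    and zero: "\<And>w. test_fun w \<Longrightarrow> integral\<^sup>L lborel (\<lambda>x. h x * deriv w x) = 0"
  obtains C where "AE x in lborel. h x = C"
proof -
  define C where "C = integral\<^sup>L lborel (\<lambda>x. h x * unit_bump x)"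
  have test_bump: "test_fun unit_bump"
    by (rule test_funI[OF smooth_unit_bump, of 1]) (auto intro: unit_bump_eq_0)
  have "integral\<^sup>L lborel (\<lambda>x. (h x - C) * p x) = 0" if p: "test_fun p" for p
  proof -
    obtain W where W: "test_fun W" "\<And>x. deriv W x = p x - integral\<^sup>L lborel p * unit_bump x"
      using test_fun_primitive[OF p] by blast
    have "0 = integral\<^sup>L lborel (\<lambda>x. h x * p x - integral\<^sup>L lborel p * (h x * unit_bump x))"
      using zero[OF W(1)] by (simp add: W(2) algebra_simps)
    also have "\<dots> = integral\<^sup>L lborel (\<lambda>x. h x * p x) - integral\<^sup>L lborel p * C"
      using locally_integrable_mult_test[OF h p] locally_integrable_mult_test[OF h test_bump]
      by (simp add: C_def)
    also have "\<dots> = integral\<^sup>L lborel (\<lambda>x. (h x - C) * p x)"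
      using locally_integrable_mult_test[OF h p] test_fun_integrable[OF p]
      by (simp add: left_diff_distrib)
    finally show ?thesis by simp
  qed
  then have "AE x in lborel. h x - C = 0"
    by (intro AE_eq_0_if_orthogonal_test_funs locally_integrable_diff h
        locally_integrable_continuous continuous_intros)
  then show ?thesis by (intro that[of C]) auto
qed

section \<open>Weak derivatives\<close>

text \<open>The signed integral \<open>\<integral>\<^sub>0\<^sup>t v\<close>: one of the two intervals is empty, or both are \<open>{0}\<close>.\<close>

definition primitive :: "(real \<Rightarrow> real) \<Rightarrow> real \<Rightarrow> real" where
  "primitive v t = integral {0..t} v - integral {t..0} v"

lemma primitive_diff:
  assumes "locally_integrable v" "x \<le> y"
  shows "primitive v y - primitive v x = integral {x..y} v"
proof -
  have int: "v integrable_on {a..b}" for a b by (rule locally_integrable_integral_Icc(1)[OF assms(1)])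
  define M where "M = \<bar>x\<bar> + \<bar>y\<bar>"
  have from_M: "primitive v t = integral {-M..t} v - integral {-M..0} v" if "-M \<le> t" for t
  proof (cases "0 \<le> t")
    case True
    have "integral {-M..0} v + integral {0..t} v = integral {-M..t} v"
      using True M_def by (intro Henstock_Kurzweil_Integration.integral_combine int) auto
    moreover have "integral {t..0} v = 0" using True by (cases "t = 0") auto
    ultimately show ?thesis by (simp add: primitive_def)
  next
    case False
    have "integral {-M..t} v + integral {t..0} v = integral {-M..0} v"
      using False that by (intro Henstock_Kurzweil_Integration.integral_combine int) auto
    then show ?thesis using False by (simp add: primitive_def)
  qed
  have "integral {-M..x} v + integral {x..y} v = integral {-M..y} v"
    using assms(2) M_def by (intro Henstock_Kurzweil_Integration.integral_combine int) auto
  then show ?thesis using from_M[of x] from_M[of y] M_def by simp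
qed

lemma continuous_on_primitive:
  assumes "locally_integrable v"
  shows "continuous_on UNIV (primitive v)"
proof -
  have "isCont (primitive v) t" for t
  proof -
    have "continuous_on {t-1..t+1} (\<lambda>s. primitive v (t-1) + integral {t-1..s} v)"
      by (intro continuous_intros indefinite_integral_continuous_1 locally_integrable_integral_Icc(1)[OF assms])
    moreover have "primitive v (t-1) + integral {t-1..s} v = primitive v s" if "s \<in> {t-1..t+1}" for s
      using primitive_diff[OF assms, of "t-1" s] that by simp
    ultimately have "continuous_on {t-1..t+1} (primitive v)"
      by (rule continuous_on_eq)
    then show ?thesis by (rule continuous_on_interior) simp
  qed
  then show ?thesis by (simp add: continuous_at_imp_continuous_on)
qed

lemma has_real_derivative_if_increments_integral:
  assumes q: "continuous_on UNIV q" and F: "\<And>x y. x \<le> y \<Longrightarrow> F y - F x = integral {x..y} q"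
  shows "(F has_real_derivative q t) (at t)"
proof -
  have "((\<lambda>s. F (t - 1) + integral {t-1..s} q) has_real_derivative q t) (at t within {t-1..t+1})"
    by (rule derivative_eq_intros integral_has_real_derivative[OF continuous_on_subset[OF q]] | simp)+
  moreover have "at t within {t-1..t+1} = at t" by (rule at_within_interior) simp
  ultimately have d: "((\<lambda>s. F (t - 1) + integral {t-1..s} q) has_real_derivative q t) (at t)"
    by simp
  then show ?thesis
  proof (rule has_field_derivative_transform_within_open[of _ _ _ "{t-1<..}"])
    show "F (t - 1) + integral {t-1..s} q = F s" if "s \<in> {t-1<..}" for s
      using F[of "t-1" s] that by simp
  qed auto
qed

lemma integral_triangle_swap:
  fixes v \<omega> :: "real \<Rightarrow> real"
  assumes v: "locally_integrable v" and \<omega>: "locally_integrable \<omega>"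
  shows "(LBINT t. indicator {a..b} t * \<omega> t * (LBINT s. indicator {a..t} s * v s))
       = (LBINT s. indicator {a..b} s * v s * (LBINT t. indicator {s..b} t * \<omega> t))"
proof -
  have [measurable]: "v \<in> borel_measurable borel" "\<omega> \<in> borel_measurable borel"
    using v \<omega> by (simp_all add: locally_integrable_def)
  define F where "F s t = (if a \<le> s \<and> s \<le> t \<and> t \<le> b then v s * \<omega> t else 0)" for s t
  define G where "G p = \<bar>indicator {a..b} (fst p) * v (fst p)\<bar> * \<bar>indicator {a..b} (snd p) * \<omega> (snd p)\<bar>"
    for p :: "real \<times> real"
  have iv: "integrable lborel (\<lambda>s. \<bar>indicator {a..b} s * v s\<bar>)"
    and i\<omega>: "integrable lborel (\<lambda>t. \<bar>indicator {a..b} t * \<omega> t\<bar>)"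
    using v \<omega> unfolding locally_integrable_def by auto
  have "integrable (lborel \<Otimes>\<^sub>M lborel) G"
  proof (rule lborel_pair.Fubini_integrable)
    show "G \<in> borel_measurable (lborel \<Otimes>\<^sub>M lborel)" unfolding G_def by measurable
    have "(\<lambda>s. LBINT t. norm (G (s, t)))
        = (\<lambda>s. \<bar>indicator {a..b} s * v s\<bar> * (LBINT t. \<bar>indicator {a..b} t * \<omega> t\<bar>))"
      by (simp add: G_def)
    then show "integrable lborel (\<lambda>s. LBINT t. norm (G (s, t)))"
      using iv by simp
    show "AE s in lborel. integrable lborel (\<lambda>t. G (s, t))"
      unfolding G_def using i\<omega> by (intro AE_I2 integrable_mult_right) simp
  qed
  then have "integrable (lborel \<Otimes>\<^sub>M lborel) (\<lambda>(s, t). F s t)"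
  proof (rule Bochner_Integration.integrable_bound)
    show "(\<lambda>(s, t). F s t) \<in> borel_measurable (lborel \<Otimes>\<^sub>M lborel)" unfolding F_def by measurable
    show "AE p in lborel \<Otimes>\<^sub>M lborel. norm ((\<lambda>(s, t). F s t) p) \<le> norm (G p)"
      by (intro AE_I2) (auto simp: F_def G_def abs_mult split: split_indicator)
  qed
  then have "(LBINT t. LBINT s. F s t) = (LBINT s. LBINT t. F s t)"
    by (rule lborel_pair.Fubini_integral)
  moreover have "(\<lambda>s. F s t) = (\<lambda>s. indicator {a..b} t * \<omega> t * (indicator {a..t} s * v s))" for t
    by (auto simp: F_def indicator_def fun_eq_iff)
  moreover have "(\<lambda>t. F s t) = (\<lambda>t. indicator {a..b} s * v s * (indicator {s..b} t * \<omega> t))" for s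
    by (auto simp: F_def indicator_def fun_eq_iff)
  ultimately show ?thesis by simp
qed

lemma test_fun_integral_deriv_eq_0:
  assumes "test_fun w"
  shows "integral\<^sup>L lborel (deriv w) = 0"
proof -
  obtain R where "\<And>x. R < \<bar>x\<bar> \<Longrightarrow> w x = 0" "\<And>x. R < \<bar>x\<bar> \<Longrightarrow> deriv w x = 0"
    using test_fun_support[OF assms] by metis
  then show ?thesis
    by (intro integral_deriv_eq_0[where F = w and R = R] test_fun_has_derivative assms
        test_fun_continuous_on test_fun_deriv)
qed

lemma integral_primitive_mult_deriv:
  assumes v: "locally_integrable v" and w: "test_fun w"
  shows "integral\<^sup>L lborel (\<lambda>t. primitive v t * deriv w t) = - integral\<^sup>L lborel (\<lambda>s. v s * w s)"
proof -
  obtain R0 where R0: "0 < R0" "\<And>x. R0 < \<bar>x\<bar> \<Longrightarrow> w x = 0" "\<And>x. R0 < \<bar>x\<bar> \<Longrightarrow> deriv w x = 0"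
    using test_fun_support[OF w] by metis
  define R where "R = R0 + 1"
  have out: "w x = 0" "deriv w x = 0" if "x \<notin> {-R..R}" for x
    using R0 that by (auto simp: R_def)
  have wR: "w R = 0" using R0 by (simp add: R_def)
  have w': "test_fun (deriv w)" by (rule test_fun_deriv[OF w])
  have lw': "locally_integrable (deriv w)"
    by (rule locally_integrable_continuous[OF test_fun_continuous_on[OF w']])
  have "integral\<^sup>L lborel (\<lambda>t. primitive v t * deriv w t)
      = integral\<^sup>L lborel (\<lambda>t. (primitive v t - primitive v (-R)) * deriv w t)"
    using locally_integrable_mult_test[OF locally_integrable_continuous[OF continuous_on_primitive[OF v]] w']
      test_fun_integrable[OF w'] test_fun_integral_deriv_eq_0[OF w] by (simp add: left_diff_distrib)
  also have "\<dots> = (LBINT t. indicator {-R..R} t * deriv w t * (LBINT s. indicator {-R..t} s * v s))"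
  proof (intro Bochner_Integration.integral_cong refl)
    fix t
    show "(primitive v t - primitive v (-R)) * deriv w t
        = indicator {-R..R} t * deriv w t * (LBINT s. indicator {-R..t} s * v s)"
      using primitive_diff[OF v, of "-R" t] locally_integrable_integral_Icc(2)[OF v, of "-R" t] out(2)[of t]
      by (cases "t \<in> {-R..R}") auto
  qed
  also have "\<dots> = (LBINT s. indicator {-R..R} s * v s * (LBINT t. indicator {s..R} t * deriv w t))"
    by (rule integral_triangle_swap[OF v lw'])
  also have "\<dots> = (LBINT s. - (v s * w s))"
  proof (intro Bochner_Integration.integral_cong refl)
    fix s
    have "(LBINT t. indicator {s..R} t * deriv w t) = integral {s..R} (deriv w)"
      by (rule locally_integrable_integral_Icc(2)[OF lw'])
    also have "\<dots> = w R - w s" if "s \<le> R"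
      using that test_fun_has_derivative[OF w]
      by (intro integral_unique fundamental_theorem_of_calculus)
         (auto simp: has_real_derivative_iff_has_vector_derivative intro: has_vector_derivative_at_within)
    finally show "indicator {-R..R} s * v s * (LBINT t. indicator {s..R} t * deriv w t) = - (v s * w s)"
      using wR out(1)[of s] by (cases "s \<in> {-R..R}") (auto simp: algebra_simps)
  qed
  finally show ?thesis by simp
qed

lemma weak_derivative_representative:
  assumes u: "locally_integrable u" and v: "locally_integrable v"
    and weak: "\<And>w. test_fun w \<Longrightarrow> integral\<^sup>L lborel (\<lambda>x. u x * deriv w x) = - integral\<^sup>L lborel (\<lambda>x. v x * w x)"
  obtains U where "continuous_on UNIV U" "AE x in lborel. u x = U x"
    "\<And>x y. x \<le> y \<Longrightarrow> U y - U x = integral {x..y} v"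
proof -
  have lP: "locally_integrable (primitive v)"
    by (rule locally_integrable_continuous[OF continuous_on_primitive[OF v]])
  have "integral\<^sup>L lborel (\<lambda>x. (u x - primitive v x) * deriv w x) = 0" if w: "test_fun w" for w
    using weak[OF w] integral_primitive_mult_deriv[OF v w]
      locally_integrable_mult_test[OF u test_fun_deriv[OF w]] locally_integrable_mult_test[OF lP test_fun_deriv[OF w]]
    by (simp add: left_diff_distrib)
  then obtain C where C: "AE x in lborel. u x - primitive v x = C"
    using du_Bois_Reymond[OF locally_integrable_diff[OF u lP]] by blast
  show ?thesis
  proof (rule that[of "\<lambda>x. primitive v x + C"])
    show "continuous_on UNIV (\<lambda>x. primitive v x + C)"
      by (intro continuous_intros continuous_on_primitive[OF v])
    show "AE x in lborel. u x = primitive v x + C" using C by eventually_elim simp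
    show "primitive v y + C - (primitive v x + C) = integral {x..y} v" if "x \<le> y" for x y
      using primitive_diff[OF v that] by simp
  qed
qed

lemma weak_derivative_continuous:
  assumes u: "locally_integrable u" and q: "continuous_on UNIV q"
    and weak: "\<And>w. test_fun w \<Longrightarrow> integral\<^sup>L lborel (\<lambda>x. u x * deriv w x) = - integral\<^sup>L lborel (\<lambda>x. q x * w x)"
  obtains U where "AE x in lborel. u x = U x" "\<And>x. (U has_real_derivative q x) (at x)"
proof -
  obtain U where U: "continuous_on UNIV U" "AE x in lborel. u x = U x"
    "\<And>x y. x \<le> y \<Longrightarrow> U y - U x = integral {x..y} q"
    using weak_derivative_representative[OF u locally_integrable_continuous[OF q] weak] by blast
  show ?thesis by (rule that[OF U(2) has_real_derivative_if_increments_integral[OF q U(3)]])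
qed

section \<open>The nonlinearity\<close>

definition f_poly :: "nat \<Rightarrow> real \<Rightarrow> real \<Rightarrow> real \<Rightarrow> real \<Rightarrow> real \<Rightarrow> real \<Rightarrow> real" where
  "f_poly k a b c d u v = a * u^(2*k+1) + b * u^k * v^(k+1)
     + c * (real k + 2) / real k * u^(k+1) * v^k + d * u^(k-1) * v^(k+2)"

definition g_poly :: "nat \<Rightarrow> real \<Rightarrow> real \<Rightarrow> real \<Rightarrow> real \<Rightarrow> real \<Rightarrow> real \<Rightarrow> real" where
  "g_poly k a b c d u v = a * v^(2*k+1) + b * u^(k+1) * v^k
     + c * u^(k+2) * v^(k-1) + d * (real k + 2) / real k * u^k * v^(k+1)"

lemma H_chain_rule:
  assumes "1 \<le> k" "(U has_real_derivative U') (at x)" "(W has_real_derivative W') (at x)"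
  shows "((\<lambda>x. H k a b c d (U x) (W x)) has_real_derivative
           f_poly k a b c d (U x) (W x) * U' + g_poly k a b c d (U x) (W x) * W') (at x)"
proof -
  obtain m where k: "k = Suc m" using assms by (cases k) auto
  show ?thesis
    unfolding f_poly_def g_poly_def H_def k
    by (rule derivative_eq_intros assms refl)+
       (simp add: divide_simps power_add, simp add: algebra_simps)
qed

lemma f_eq_f_poly: "1 \<le> k \<Longrightarrow> f k a b c d u v = f_poly k a b c d u v"
  using H_chain_rule[of k "\<lambda>s. s" 1 u "\<lambda>_. v" 0 a b c d]
  unfolding f_def by (simp add: DERIV_imp_deriv)

lemma g_eq_g_poly: "1 \<le> k \<Longrightarrow> g k a b c d u v = g_poly k a b c d u v"
  using H_chain_rule[of k "\<lambda>_. u" 0 v "\<lambda>s. s" 1 a b c d]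
  unfolding g_def by (simp add: DERIV_imp_deriv)

lemma H_Euler_identity:
  assumes "1 \<le> k"
  shows "f_poly k a b c d u v * u + g_poly k a b c d u v * v = (2 * real k + 2) * H k a b c d u v"
proof -
  obtain m where k: "k = Suc m" using assms by (cases k) auto
  show ?thesis
    unfolding f_poly_def g_poly_def H_def k
    by (simp add: divide_simps power_add, simp add: algebra_simps)
qed

lemma abs_monomial_le:
  fixes p q M :: real
  assumes "\<bar>p\<bar> \<le> M" "\<bar>q\<bar> \<le> M" "2 \<le> i + j"
  shows "\<bar>p^i * q^j\<bar> \<le> M^(i+j-2) * (p^2 + q^2)"
proof -
  define m where "m = max \<bar>p\<bar> \<bar>q\<bar>"
  have "\<bar>p^i * q^j\<bar> = \<bar>p\<bar>^i * \<bar>q\<bar>^j" by (simp add: abs_mult power_abs)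
  also have "\<dots> \<le> m^i * m^j" by (intro mult_mono power_mono) (auto simp: m_def)
  also have "\<dots> = m^(i+j-2) * m^2"
  proof -
    have "i + j = (i + j - 2) + 2" using assms(3) by simp
    then show ?thesis by (metis power_add)
  qed
  also have "\<dots> \<le> M^(i+j-2) * (p^2 + q^2)"
  proof (intro mult_mono power_mono)
    show "m^2 \<le> p^2 + q^2" by (cases "\<bar>p\<bar> \<le> \<bar>q\<bar>") (simp_all add: m_def max_def)
  qed (use assms in \<open>auto simp: m_def\<close>)
  finally show ?thesis .
qed

lemma integrable_monomial:
  fixes U W :: "real \<Rightarrow> real"
  assumes [measurable]: "U \<in> borel_measurable borel" "W \<in> borel_measurable borel"
    and bounded: "\<And>x. \<bar>U x\<bar> \<le> M" "\<And>x. \<bar>W x\<bar> \<le> M"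
    and "integrable lborel (\<lambda>x. (U x)^2)" "integrable lborel (\<lambda>x. (W x)^2)" and ij: "2 \<le> i + j"
  shows "integrable lborel (\<lambda>x. U x ^ i * W x ^ j)"
proof (rule Bochner_Integration.integrable_bound)
  show "integrable lborel (\<lambda>x. M^(i+j-2) * ((U x)^2 + (W x)^2))"
    using assms by (intro integrable_mult_right Bochner_Integration.integrable_add)
  show "(\<lambda>x. U x ^ i * W x ^ j) \<in> borel_measurable lborel" by measurable
  show "AE x in lborel. norm (U x ^ i * W x ^ j) \<le> norm (M^(i+j-2) * ((U x)^2 + (W x)^2))"
    using abs_monomial_le[OF bounded ij] by (intro AE_I2) (metis real_norm_def abs_ge_self order_trans)
qed

lemma integrable_H_terms:
  fixes U W :: "real \<Rightarrow> real"
  assumes k: "1 \<le> k" and [measurable]: "U \<in> borel_measurable borel" "W \<in> borel_measurable borel"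
    and "\<And>x. \<bar>U x\<bar> \<le> M" "\<And>x. \<bar>W x\<bar> \<le> M"
    and "integrable lborel (\<lambda>x. (U x)^2)" "integrable lborel (\<lambda>x. (W x)^2)"
  shows "integrable lborel (\<lambda>x. f_poly k a b c d (U x) (W x) * U x)"
    and "integrable lborel (\<lambda>x. g_poly k a b c d (U x) (W x) * W x)"
    and "integrable lborel (\<lambda>x. H k a b c d (U x) (W x))"
proof -
  note monomial = integrable_monomial[OF assms(2-7)]
  obtain m where m: "k = Suc m" using k by (cases k) auto
  have "integrable lborel (\<lambda>x. a * (U x^(2*k+2) * W x^0) + b * (U x^(k+1) * W x^(k+1))
      + c * (real k + 2) / real k * (U x^(k+2) * W x^k) + d * (U x^k * W x^(k+2)))"
    by (intro Bochner_Integration.integrable_add integrable_mult_right monomial) simp_all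
  moreover have "(\<lambda>x. f_poly k a b c d (U x) (W x) * U x) = (\<lambda>x. a * (U x^(2*k+2) * W x^0)
      + b * (U x^(k+1) * W x^(k+1)) + c * (real k + 2) / real k * (U x^(k+2) * W x^k)
      + d * (U x^k * W x^(k+2)))"
    by (simp add: fun_eq_iff f_poly_def m algebra_simps)
  ultimately show fU: "integrable lborel (\<lambda>x. f_poly k a b c d (U x) (W x) * U x)" by simp
  have "integrable lborel (\<lambda>x. a * (U x^0 * W x^(2*k+2)) + b * (U x^(k+1) * W x^(k+1))
      + c * (U x^(k+2) * W x^k) + d * (real k + 2) / real k * (U x^k * W x^(k+2)))"
    by (intro Bochner_Integration.integrable_add integrable_mult_right monomial) simp_all
  moreover have "(\<lambda>x. g_poly k a b c d (U x) (W x) * W x) = (\<lambda>x. a * (U x^0 * W x^(2*k+2))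
      + b * (U x^(k+1) * W x^(k+1)) + c * (U x^(k+2) * W x^k)
      + d * (real k + 2) / real k * (U x^k * W x^(k+2)))"
    by (simp add: fun_eq_iff g_poly_def m algebra_simps)
  ultimately show gW: "integrable lborel (\<lambda>x. g_poly k a b c d (U x) (W x) * W x)" by simp
  have "(\<lambda>x. H k a b c d (U x) (W x))
      = (\<lambda>x. (f_poly k a b c d (U x) (W x) * U x + g_poly k a b c d (U x) (W x) * W x) / (2 * real k + 2))"
    using H_Euler_identity[OF k] by (simp add: fun_eq_iff)
  then show "integrable lborel (\<lambda>x. H k a b c d (U x) (W x))" using fU gW by simp
qed

section \<open>Regularity and integral identities of solutions\<close>

lemma integrable_lborel_const_iff: "integrable lborel (\<lambda>x::real. c) \<longleftrightarrow> c = (0::real)"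
proof
  assume "integrable lborel (\<lambda>x::real. c)"
  then have "integrable lborel (\<lambda>x::real. (1 / c) * c)" by (rule integrable_mult_right)
  moreover have "\<not> integrable lborel (\<lambda>x::real. 1::real)"
    using integrable_indicator_iff[of lborel "UNIV :: real set"] by simp
  ultimately show "c = 0" by (cases "c = 0") simp_all
qed simp

lemma abs_diff_square_le_integral:
  fixes U V :: "real \<Rightarrow> real"
  assumes dU: "\<And>x. (U has_real_derivative V x) (at x)" and cV: "continuous_on UNIV V"
    and iS: "integrable lborel (\<lambda>x. (U x)^2 + (V x)^2)" and "p \<le> q"
  shows "\<bar>(U q)^2 - (U p)^2\<bar> \<le> integral\<^sup>L lborel (\<lambda>x. (U x)^2 + (V x)^2)"
proof -
  have cU: "continuous_on UNIV U"
    using DERIV_isCont[OF dU] by (simp add: continuous_at_imp_continuous_on)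
  have cS: "continuous_on UNIV (\<lambda>x. (U x)^2 + (V x)^2)" by (intro continuous_intros cU cV)
  have "((\<lambda>x. (U x)^2) has_real_derivative 2 * U x * V x) (at x)" for x
    using DERIV_mult[OF dU dU, of x] by (simp add: power2_eq_square algebra_simps)
  then have "((\<lambda>x. 2 * U x * V x) has_integral (U q)^2 - (U p)^2) {p..q}"
    using assms(4) by (intro fundamental_theorem_of_calculus)
      (auto simp: has_real_derivative_iff_has_vector_derivative intro: has_vector_derivative_at_within)
  then have "\<bar>(U q)^2 - (U p)^2\<bar> = norm (integral {p..q} (\<lambda>x. 2 * U x * V x))"
    by (simp add: integral_unique)
  also have "\<dots> \<le> integral {p..q} (\<lambda>x. (U x)^2 + (V x)^2)"
  proof (rule integral_norm_bound_integral)
    show "(\<lambda>x. 2 * U x * V x) integrable_on {p..q}"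
      by (intro integrable_continuous_interval continuous_intros continuous_on_subset[OF cU]
          continuous_on_subset[OF cV]) auto
    show "(\<lambda>x. (U x)^2 + (V x)^2) integrable_on {p..q}"
      by (rule integrable_continuous_interval[OF continuous_on_subset[OF cS]]) simp
    show "norm (2 * U x * V x) \<le> (U x)^2 + (V x)^2" for x
      using sum_squares_bound[of "\<bar>U x\<bar>" "\<bar>V x\<bar>"] by (simp add: abs_mult)
  qed
  also have "\<dots> = integral\<^sup>L lborel (\<lambda>t. indicator {p..q} t * ((U t)^2 + (V t)^2))"
    using locally_integrable_integral_Icc(2)[OF locally_integrable_continuous[OF cS]] by simp
  also have "\<dots> \<le> integral\<^sup>L lborel (\<lambda>x. (U x)^2 + (V x)^2)"
  proof (rule integral_mono[OF _ iS])
    show "integrable lborel (\<lambda>t. indicator {p..q} t * ((U t)^2 + (V t)^2))"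
      using integrable_real_mult_indicator[OF _ iS, of "{p..q}"] by (simp add: mult.commute)
  qed (simp add: indicator_def)
  finally show ?thesis .
qed

lemma bounded_if_square_integrable_C1:
  fixes U V :: "real \<Rightarrow> real"
  assumes dU: "\<And>x. (U has_real_derivative V x) (at x)" and cV: "continuous_on UNIV V"
    and iU: "integrable lborel (\<lambda>x. (U x)^2)" and iV: "integrable lborel (\<lambda>x. (V x)^2)"
  obtains B where "\<And>x. \<bar>U x\<bar> \<le> B"
proof -
  have [measurable]: "U \<in> borel_measurable borel"
    using DERIV_isCont[OF dU] by (simp add: continuous_at_imp_continuous_on borel_measurable_continuous_onI)
  define I where "I = integral\<^sup>L lborel (\<lambda>x. (U x)^2 + (V x)^2)"
  have iS: "integrable lborel (\<lambda>x. (U x)^2 + (V x)^2)" by (intro Bochner_Integration.integrable_add iU iV)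
  have "\<not> (\<forall>y. 1 < (U y)^2)"
  proof
    assume "\<forall>y. 1 < (U y)^2"
    then have "integrable lborel (\<lambda>x::real. 1::real)"
      by (intro Bochner_Integration.integrable_bound[OF iU]) (auto intro: less_imp_le)
    then show False by (simp add: integrable_lborel_const_iff)
  qed
  then obtain y0 where y0: "(U y0)^2 \<le> 1" by (auto simp: not_less)
  have sq: "(U x)^2 - (U y0)^2 \<le> I" for x
    using abs_diff_square_le_integral[OF dU cV iS, of y0 x] abs_diff_square_le_integral[OF dU cV iS, of x y0]
    by (cases "y0 \<le> x") (auto simp: I_def abs_le_iff)
  have "\<bar>U x\<bar> \<le> 2 + I" for x
    using sq[of x] y0 abs_le_1_plus_square[of "U x"] by linarith
  then show ?thesis by (rule that)
qed

lemma integrable_DERIV_zero_imp_zero: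
  fixes E :: "real \<Rightarrow> real"
  assumes "\<And>x. (E has_real_derivative 0) (at x)" "integrable lborel E"
  shows "E x = 0"
proof -
  have "E y = E x" for y using assms(1) by (intro DERIV_isconst_all) auto
  then have "E = (\<lambda>_. E x)" by auto
  then show ?thesis using assms(2) integrable_lborel_const_iff by metis
qed

lemma pohozaev_identity:
  fixes U W U' W' :: "real \<Rightarrow> real" and G Gu Gw :: "real \<Rightarrow> real \<Rightarrow> real"
  assumes dU: "\<And>x. (U has_real_derivative U' x) (at x)" and dW: "\<And>x. (W has_real_derivative W' x) (at x)"
    and dU': "\<And>x. (U' has_real_derivative U x - Gu (U x) (W x)) (at x)"
    and dW': "\<And>x. (W' has_real_derivative W x - Gw (U x) (W x)) (at x)"
    and dG: "\<And>x. ((\<lambda>x. G (U x) (W x)) has_real_derivative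
                   Gu (U x) (W x) * U' x + Gw (U x) (W x) * W' x) (at x)"
    and "integrable lborel (\<lambda>x. (U x)^2)" "integrable lborel (\<lambda>x. (W x)^2)"
      "integrable lborel (\<lambda>x. (U' x)^2)" "integrable lborel (\<lambda>x. (W' x)^2)"
      "integrable lborel (\<lambda>x. G (U x) (W x))"
  shows "norm2 U W - norm2 U' W' = 2 * integral\<^sup>L lborel (\<lambda>x. G (U x) (W x))"
proof -
  define E where "E x = (U' x)^2 + (W' x)^2 - (U x)^2 - (W x)^2 + 2 * G (U x) (W x)" for x
  have "(E has_real_derivative 0) (at x)" for x
    unfolding E_def
    by (rule derivative_eq_intros dU dW dU' dW' dG refl)+ (simp add: algebra_simps)
  moreover have "integrable lborel E"
    unfolding E_def using assms(6-) by simp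
  ultimately have "E x = 0" for x by (rule integrable_DERIV_zero_imp_zero)
  then have "E = (\<lambda>_. 0)" by auto
  then have "integral\<^sup>L lborel E = 0" by simp
  moreover have "integral\<^sup>L lborel E = norm2 U' W' - norm2 U W + 2 * integral\<^sup>L lborel (\<lambda>x. G (U x) (W x))"
    unfolding E_def norm2_def using assms(6-) by simp
  ultimately show ?thesis by simp
qed

lemma weak_solution_component_regular:
  assumes u: "H1_with_deriv u u'"
    and U: "continuous_on UNIV U" "AE x in lborel. u x = U x"
      "\<And>x y. x \<le> y \<Longrightarrow> U y - U x = integral {x..y} u'"
    and F: "G \<in> borel_measurable borel" "continuous_on UNIV F" "AE x in lborel. G x = F x"
    and weak: "\<And>w. test_fun w \<Longrightarrow>
      integral\<^sup>L lborel (\<lambda>x. u x * w x + u' x * deriv w x - G x * w x) = 0"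
  obtains V where "AE x in lborel. u' x = V x" "\<And>x. (U has_real_derivative V x) (at x)"
    "\<And>x. (V has_real_derivative U x - F x) (at x)"
proof -
  note u = H1_with_derivD[OF u]
  have [measurable]: "u \<in> borel_measurable borel" "u' \<in> borel_measurable borel"
    "U \<in> borel_measurable borel" "F \<in> borel_measurable borel" "G \<in> borel_measurable borel"
    using u U(1) F borel_measurable_continuous_onI by auto
  have cq: "continuous_on UNIV (\<lambda>x. U x - F x)" by (intro continuous_intros U(1) F(2))
  have "integral\<^sup>L lborel (\<lambda>x. u' x * deriv w x) = - integral\<^sup>L lborel (\<lambda>x. (U x - F x) * w x)"
    if w: "test_fun w" for w
  proof -
    have [measurable]: "w \<in> borel_measurable borel" "deriv w \<in> borel_measurable borel"
      using w test_fun_deriv test_fun_borel_measurable by blast+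
    have "0 = integral\<^sup>L lborel (\<lambda>x. u x * w x + u' x * deriv w x - G x * w x)"
      using weak[OF w] by simp
    also have "\<dots> = integral\<^sup>L lborel (\<lambda>x. u' x * deriv w x + (U x - F x) * w x)"
      by (rule integral_cong_AE) (use U(2) F(3) in \<open>auto simp: algebra_simps\<close>)
    also have "\<dots> = integral\<^sup>L lborel (\<lambda>x. u' x * deriv w x) + integral\<^sup>L lborel (\<lambda>x. (U x - F x) * w x)"
      using locally_integrable_mult_test[OF u(2) test_fun_deriv[OF w]]
        locally_integrable_mult_test[OF locally_integrable_continuous[OF cq] w] by simp
    finally show ?thesis by simp
  qed
  then obtain V where V: "AE x in lborel. u' x = V x" "\<And>x. (V has_real_derivative U x - F x) (at x)"
    using weak_derivative_continuous[OF u(2) cq] by blast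
  have cV: "continuous_on UNIV V"
    using DERIV_isCont[OF V(2)] by (simp add: continuous_at_imp_continuous_on)
  have "(U has_real_derivative V x) (at x)" for x
  proof (rule has_real_derivative_if_increments_integral[OF cV])
    show "U z - U y = integral {y..z} V" if "y \<le> z" for y z
      using U(3)[OF that] integral_Icc_cong_AE[OF u(2) locally_integrable_continuous[OF cV] V(1)]
      by simp
  qed
  then show ?thesis using that V by blast
qed

lemma solution_classical:
  assumes k: "1 \<le> k" and sol: "is_solution k a b c d \<phi> \<phi>' \<psi> \<psi>'"
  obtains U W U' W' where
    "AE x in lborel. \<phi> x = U x \<and> \<psi> x = W x \<and> \<phi>' x = U' x \<and> \<psi>' x = W' x"
    "\<And>x. (U has_real_derivative U' x) (at x)" "\<And>x. (W has_real_derivative W' x) (at x)"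
    "\<And>x. (U' has_real_derivative U x - f_poly k a b c d (U x) (W x)) (at x)"
    "\<And>x. (W' has_real_derivative W x - g_poly k a b c d (U x) (W x)) (at x)"
proof -
  have H1: "H1_with_deriv \<phi> \<phi>'" "H1_with_deriv \<psi> \<psi>'" using sol by (simp_all add: is_solution_def)
  note \<phi> = H1_with_derivD[OF H1(1)] and \<psi> = H1_with_derivD[OF H1(2)]
  obtain U where U: "continuous_on UNIV U" "AE x in lborel. \<phi> x = U x"
    "\<And>x y. x \<le> y \<Longrightarrow> U y - U x = integral {x..y} \<phi>'"
    using weak_derivative_representative[OF \<phi>(1,2,7)] by blast
  obtain W where W: "continuous_on UNIV W" "AE x in lborel. \<psi> x = W x"
    "\<And>x y. x \<le> y \<Longrightarrow> W y - W x = integral {x..y} \<psi>'"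
    using weak_derivative_representative[OF \<psi>(1,2,7)] by blast
  have [measurable]: "\<phi> \<in> borel_measurable borel" "\<psi> \<in> borel_measurable borel"
    using \<phi> \<psi> by blast+
  have AE_UW: "AE x in lborel. \<phi> x = U x \<and> \<psi> x = W x" using U(2) W(2) by eventually_elim simp
  have meas: "(\<lambda>x. f k a b c d (\<phi> x) (\<psi> x)) \<in> borel_measurable borel"
    "(\<lambda>x. g k a b c d (\<phi> x) (\<psi> x)) \<in> borel_measurable borel"
    unfolding f_eq_f_poly[OF k] f_poly_def g_eq_g_poly[OF k] g_poly_def by measurable
  have cont: "continuous_on UNIV (\<lambda>x. f_poly k a b c d (U x) (W x))"
    "continuous_on UNIV (\<lambda>x. g_poly k a b c d (U x) (W x))"
    unfolding f_poly_def g_poly_def by (intro continuous_intros U(1) W(1))+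
  have AE_fg: "AE x in lborel. f k a b c d (\<phi> x) (\<psi> x) = f_poly k a b c d (U x) (W x)"
    "AE x in lborel. g k a b c d (\<phi> x) (\<psi> x) = g_poly k a b c d (U x) (W x)"
    using AE_UW by (eventually_elim, simp add: f_eq_f_poly[OF k] g_eq_g_poly[OF k])+
  have weak:
    "integral\<^sup>L lborel (\<lambda>x. \<phi> x * w x + \<phi>' x * deriv w x - f k a b c d (\<phi> x) (\<psi> x) * w x) = 0"
    "integral\<^sup>L lborel (\<lambda>x. \<psi> x * w x + \<psi>' x * deriv w x - g k a b c d (\<phi> x) (\<psi> x) * w x) = 0"
    if "test_fun w" for w
    using sol test_fun_H1_with_deriv[OF that] by (simp_all add: is_solution_def)
  obtain U' where U': "AE x in lborel. \<phi>' x = U' x" "\<And>x. (U has_real_derivative U' x) (at x)"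
    "\<And>x. (U' has_real_derivative U x - f_poly k a b c d (U x) (W x)) (at x)"
    using weak_solution_component_regular[OF H1(1) U meas(1) cont(1) AE_fg(1) weak(1)] by blast
  obtain W' where W': "AE x in lborel. \<psi>' x = W' x" "\<And>x. (W has_real_derivative W' x) (at x)"
    "\<And>x. (W' has_real_derivative W x - g_poly k a b c d (U x) (W x)) (at x)"
    using weak_solution_component_regular[OF H1(2) W meas(2) cont(2) AE_fg(2) weak(2)] by blast
  have "AE x in lborel. \<phi> x = U x \<and> \<psi> x = W x \<and> \<phi>' x = U' x \<and> \<psi>' x = W' x"
    using AE_UW U'(1) W'(1) by eventually_elim simp
  then show ?thesis by (rule that[OF _ U'(2) W'(2) U'(3) W'(3)])
qed

lemma H1_C1_representative:
  assumes u: "H1_with_deriv u u'" and AE: "AE x in lborel. u x = U x \<and> u' x = U' x"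
    and dU: "\<And>x. (U has_real_derivative U' x) (at x)" and cU': "continuous_on UNIV U'"
  obtains B where "\<And>x. \<bar>U x\<bar> \<le> B"
    "integrable lborel (\<lambda>x. (U x)^2)" "integrable lborel (\<lambda>x. (U' x)^2)"
proof -
  note u = H1_with_derivD[OF u]
  have "continuous_on UNIV U"
    using DERIV_isCont[OF dU] by (simp add: continuous_at_imp_continuous_on)
  then have [measurable]: "U \<in> borel_measurable borel" "U' \<in> borel_measurable borel"
    using cU' borel_measurable_continuous_onI by blast+
  have sq: "integrable lborel (\<lambda>x. (U x)^2)" "integrable lborel (\<lambda>x. (U' x)^2)"
    by (rule integrable_cong_AE_imp[OF u(5)], use AE in auto)
       (rule integrable_cong_AE_imp[OF u(6)], use AE in auto)
  obtain B where "\<And>x. \<bar>U x\<bar> \<le> B" using bounded_if_square_integrable_C1[OF dU cU' sq] by blast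
  with sq show ?thesis by (intro that)
qed

lemma solution_regular:
  assumes k: "1 \<le> k" and sol: "is_solution k a b c d \<phi> \<phi>' \<psi> \<psi>'"
  obtains U W U' W' M where
    "AE x in lborel. \<phi> x = U x \<and> \<psi> x = W x \<and> \<phi>' x = U' x \<and> \<psi>' x = W' x"
    "\<And>x. (U has_real_derivative U' x) (at x)" "\<And>x. (W has_real_derivative W' x) (at x)"
    "\<And>x. (U' has_real_derivative U x - f_poly k a b c d (U x) (W x)) (at x)"
    "\<And>x. (W' has_real_derivative W x - g_poly k a b c d (U x) (W x)) (at x)"
    "\<And>x. \<bar>U x\<bar> \<le> M" "\<And>x. \<bar>W x\<bar> \<le> M"
    "integrable lborel (\<lambda>x. (U x)^2)" "integrable lborel (\<lambda>x. (W x)^2)"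
    "integrable lborel (\<lambda>x. (U' x)^2)" "integrable lborel (\<lambda>x. (W' x)^2)"
proof -
  obtain U W U' W' where AE: "AE x in lborel. \<phi> x = U x \<and> \<psi> x = W x \<and> \<phi>' x = U' x \<and> \<psi>' x = W' x"
    and dU: "\<And>x. (U has_real_derivative U' x) (at x)" and dW: "\<And>x. (W has_real_derivative W' x) (at x)"
    and dU': "\<And>x. (U' has_real_derivative U x - f_poly k a b c d (U x) (W x)) (at x)"
    and dW': "\<And>x. (W' has_real_derivative W x - g_poly k a b c d (U x) (W x)) (at x)"
    using solution_classical[OF k sol] by blast
  have H1: "H1_with_deriv \<phi> \<phi>'" "H1_with_deriv \<psi> \<psi>'" using sol by (simp_all add: is_solution_def)
  have AE_U: "AE x in lborel. \<phi> x = U x \<and> \<phi>' x = U' x"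
    and AE_W: "AE x in lborel. \<psi> x = W x \<and> \<psi>' x = W' x"
    using AE by (eventually_elim, simp)+
  have cont: "continuous_on UNIV U'" "continuous_on UNIV W'"
    using DERIV_isCont[OF dU'] DERIV_isCont[OF dW'] by (simp_all add: continuous_at_imp_continuous_on)
  obtain BU where
    U: "\<And>x. \<bar>U x\<bar> \<le> BU" "integrable lborel (\<lambda>x. (U x)^2)" "integrable lborel (\<lambda>x. (U' x)^2)"
    using H1_C1_representative[OF H1(1) AE_U dU cont(1)] by blast
  obtain BW where
    W: "\<And>x. \<bar>W x\<bar> \<le> BW" "integrable lborel (\<lambda>x. (W x)^2)" "integrable lborel (\<lambda>x. (W' x)^2)"
    using H1_C1_representative[OF H1(2) AE_W dW cont(2)] by blast
  have bound: "\<bar>U x\<bar> \<le> max BU BW" "\<bar>W x\<bar> \<le> max BU BW" for x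
    using U(1)[of x] W(1)[of x] by linarith+
  show ?thesis by (rule that[OF AE dU dW dU' dW' bound U(2) W(2) U(3) W(3)])
qed

lemma solution_nehari_identity:
  assumes k: "1 \<le> k" and sol: "is_solution k a b c d \<phi> \<phi>' \<psi> \<psi>'"
  shows "norm2 \<phi> \<psi> + norm2 \<phi>' \<psi>' = (2 * real k + 2) * P k a b c d \<phi> \<psi>"
proof -
  obtain U W U' W' M where AE: "AE x in lborel. \<phi> x = U x \<and> \<psi> x = W x \<and> \<phi>' x = U' x \<and> \<psi>' x = W' x"
    and dU: "\<And>x. (U has_real_derivative U' x) (at x)" and dW: "\<And>x. (W has_real_derivative W' x) (at x)"
    and "\<And>x. (U' has_real_derivative U x - f_poly k a b c d (U x) (W x)) (at x)"
      "\<And>x. (W' has_real_derivative W x - g_poly k a b c d (U x) (W x)) (at x)"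
    and bounds: "\<And>x. \<bar>U x\<bar> \<le> M" "\<And>x. \<bar>W x\<bar> \<le> M"
    and sq: "integrable lborel (\<lambda>x. (U x)^2)" "integrable lborel (\<lambda>x. (W x)^2)"
    and "integrable lborel (\<lambda>x. (U' x)^2)" "integrable lborel (\<lambda>x. (W' x)^2)"
    using solution_regular[OF k sol] by blast
  have H1: "H1_with_deriv \<phi> \<phi>'" "H1_with_deriv \<psi> \<psi>'" using sol by (simp_all add: is_solution_def)
  note \<phi> = H1_with_derivD[OF H1(1)] and \<psi> = H1_with_derivD[OF H1(2)]
  have "continuous_on UNIV U" "continuous_on UNIV W"
    using DERIV_isCont[OF dU] DERIV_isCont[OF dW] by (simp_all add: continuous_at_imp_continuous_on)
  then have [measurable]: "U \<in> borel_measurable borel" "W \<in> borel_measurable borel"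
    by (simp_all add: borel_measurable_continuous_onI)
  note terms = integrable_H_terms[OF k _ _ bounds sq, of a b c d, simplified]
  have "0 = integral\<^sup>L lborel (\<lambda>x. \<phi> x * \<phi> x + \<phi>' x * \<phi>' x - f k a b c d (\<phi> x) (\<psi> x) * \<phi> x)
      + integral\<^sup>L lborel (\<lambda>x. \<psi> x * \<psi> x + \<psi>' x * \<psi>' x - g k a b c d (\<phi> x) (\<psi> x) * \<psi> x)"
    using sol H1 by (simp add: is_solution_def)
  also have "\<dots> = integral\<^sup>L lborel (\<lambda>x. (\<phi> x)^2 + (\<phi>' x)^2 - f_poly k a b c d (U x) (W x) * U x)
      + integral\<^sup>L lborel (\<lambda>x. (\<psi> x)^2 + (\<psi>' x)^2 - g_poly k a b c d (U x) (W x) * W x)"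
    using AE \<phi>(3,4) \<psi>(3,4) unfolding f_eq_f_poly[OF k] g_eq_g_poly[OF k]
    by (intro arg_cong2[where f = "(+)"] integral_cong_AE) (auto simp: power2_eq_square f_poly_def g_poly_def)
  also have "\<dots> = norm2 \<phi> \<psi> + norm2 \<phi>' \<psi>'
      - integral\<^sup>L lborel (\<lambda>x. f_poly k a b c d (U x) (W x) * U x + g_poly k a b c d (U x) (W x) * W x)"
    using \<phi>(5,6) \<psi>(5,6) terms by (simp add: norm2_def)
  also have "\<dots> = norm2 \<phi> \<psi> + norm2 \<phi>' \<psi>' - (2 * real k + 2) * P k a b c d \<phi> \<psi>"
  proof -
    have "P k a b c d \<phi> \<psi> = integral\<^sup>L lborel (\<lambda>x. H k a b c d (U x) (W x))"
      unfolding P_def using AE \<phi>(3) \<psi>(3) by (intro integral_cong_AE) (auto simp: H_def)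
    then show ?thesis by (simp add: H_Euler_identity[OF k])
  qed
  finally show ?thesis by simp
qed

lemma solution_pohozaev_identity:
  assumes k: "1 \<le> k" and sol: "is_solution k a b c d \<phi> \<phi>' \<psi> \<psi>'"
  shows "norm2 \<phi> \<psi> - norm2 \<phi>' \<psi>' = 2 * P k a b c d \<phi> \<psi>"
proof -
  obtain U W U' W' M where AE: "AE x in lborel. \<phi> x = U x \<and> \<psi> x = W x \<and> \<phi>' x = U' x \<and> \<psi>' x = W' x"
    and dU: "\<And>x. (U has_real_derivative U' x) (at x)" and dW: "\<And>x. (W has_real_derivative W' x) (at x)"
    and dU': "\<And>x. (U' has_real_derivative U x - f_poly k a b c d (U x) (W x)) (at x)"
    and dW': "\<And>x. (W' has_real_derivative W x - g_poly k a b c d (U x) (W x)) (at x)"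
    and bounds: "\<And>x. \<bar>U x\<bar> \<le> M" "\<And>x. \<bar>W x\<bar> \<le> M"
    and sq: "integrable lborel (\<lambda>x. (U x)^2)" "integrable lborel (\<lambda>x. (W x)^2)"
      "integrable lborel (\<lambda>x. (U' x)^2)" "integrable lborel (\<lambda>x. (W' x)^2)"
    using solution_regular[OF k sol] by blast
  have H1: "H1_with_deriv \<phi> \<phi>'" "H1_with_deriv \<psi> \<psi>'" using sol by (simp_all add: is_solution_def)
  note \<phi> = H1_with_derivD[OF H1(1)] and \<psi> = H1_with_derivD[OF H1(2)]
  have "continuous_on UNIV U" "continuous_on UNIV W" "continuous_on UNIV U'" "continuous_on UNIV W'"
    using DERIV_isCont[OF dU] DERIV_isCont[OF dW] DERIV_isCont[OF dU'] DERIV_isCont[OF dW']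
    by (simp_all add: continuous_at_imp_continuous_on)
  then have [measurable]: "U \<in> borel_measurable borel" "W \<in> borel_measurable borel"
    "U' \<in> borel_measurable borel" "W' \<in> borel_measurable borel"
    by (simp_all add: borel_measurable_continuous_onI)
  have "norm2 U W - norm2 U' W' = 2 * integral\<^sup>L lborel (\<lambda>x. H k a b c d (U x) (W x))"
    using integrable_H_terms(3)[OF k _ _ bounds sq(1,2)]
    by (intro pohozaev_identity[OF dU dW dU' dW' H_chain_rule[OF k dU dW] sq]) simp_all
  moreover have "norm2 \<phi> \<psi> = norm2 U W" "norm2 \<phi>' \<psi>' = norm2 U' W'"
    unfolding norm2_def using AE \<phi>(3,4) \<psi>(3,4)
    by (intro arg_cong2[where f = "(+)"] integral_cong_AE; auto)+
  moreover have "P k a b c d \<phi> \<psi> = integral\<^sup>L lborel (\<lambda>x. H k a b c d (U x) (W x))"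
    unfolding P_def using AE \<phi>(3) \<psi>(3) by (intro integral_cong_AE) (auto simp: H_def)
  ultimately show ?thesis by simp
qed

lemma norm2_pos:
  assumes "L2 u" "L2 v" "\<not> (AE x in lborel. u x = 0 \<and> v x = 0)"
  shows "0 < norm2 u v"
proof -
  have i: "integrable lborel (\<lambda>x. (u x)^2 + (v x)^2)" using assms(1,2) by (simp add: L2_def)
  have "norm2 u v = integral\<^sup>L lborel (\<lambda>x. (u x)^2 + (v x)^2)"
    using assms(1,2) by (simp add: L2_def norm2_def)
  moreover have "integral\<^sup>L lborel (\<lambda>x. (u x)^2 + (v x)^2) \<noteq> 0"
    using integral_nonneg_eq_0_iff_AE[OF i] assms(3) by (simp add: add_nonneg_eq_0_iff)
  ultimately show ?thesis by (simp add: integral_nonneg_AE order_less_le)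
qed

theorem proposition3p4:
  fixes k :: nat and a b c d :: real and \<phi> \<phi>' \<psi> \<psi>' :: "real \<Rightarrow> real"
  assumes "k \<ge> 1" and "a \<ge> 0" and "b \<ge> 0" and "c \<ge> 0" and "d \<ge> 0"
    and sol: "is_solution k a b c d \<phi> \<phi>' \<psi> \<psi>'"
  shows "norm2 \<phi> \<psi> + norm2 \<phi>' \<psi>' = (2 * real k + 2) * P k a b c d \<phi> \<psi>
    \<and> norm2 \<phi> \<psi> - norm2 \<phi>' \<psi>' = 2 * P k a b c d \<phi> \<psi>
    \<and> norm2 \<phi>' \<psi>' = real k / (real k + 2) * norm2 \<phi> \<psi>
    \<and> P k a b c d \<phi> \<psi> = 1 / (real k + 2) * norm2 \<phi> \<psi>
    \<and> P k a b c d \<phi> \<psi> = 1 / real k * norm2 \<phi>' \<psi>'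
    \<and> (\<not> (AE x in lborel. \<phi> x = 0 \<and> \<psi> x = 0) \<longrightarrow> in_calP k a b c d \<phi> \<psi>)"
proof -
  note nehari = solution_nehari_identity[OF assms(1) sol]
    and pohozaev = solution_pohozaev_identity[OF assms(1) sol]
  have k: "0 < real k" using assms(1) by simp
  have N: "norm2 \<phi> \<psi> = (real k + 2) * P k a b c d \<phi> \<psi>"
    and D: "norm2 \<phi>' \<psi>' = real k * P k a b c d \<phi> \<psi>"
    using nehari pohozaev by (simp_all add: algebra_simps)
  have H1: "H1_with_deriv \<phi> \<phi>'" "H1_with_deriv \<psi> \<psi>'" using sol by (simp_all add: is_solution_def)
  have "in_calP k a b c d \<phi> \<psi>" if "\<not> (AE x in lborel. \<phi> x = 0 \<and> \<psi> x = 0)"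
  proof -
    have "0 < norm2 \<phi> \<psi>" using norm2_pos H1 that by (simp add: H1_with_deriv_def)
    then have "0 < P k a b c d \<phi> \<psi>" using N k by (simp add: zero_less_mult_iff)
    with H1 that show ?thesis by (auto simp: in_calP_def H1_def)
  qed
  with nehari pohozaev N D k show ?thesis by (simp add: field_simps)
qed

end
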